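(* Let $W_n$ be the irreducible Coxeter group of type $\mathrm{A}_n$, $\mathrm{B}_n$ or $\mathrm{D}_n$ (each of the three families considered separately). Then the fourth centred moment $\mathbb{E}\big((T_{W_n}-\mathbb{E}(T_{W_n}))^4\big)$ is of order $n^2$, i.e. there are constants $0<c\le C$ such that $c n^2\le \mathbb{E}\big((T_{W_n}-\mathbb{E}(T_{W_n}))^4\big)\le Cn^2$ for all sufficiently large $n$.
   Context: For a finite Coxeter system $(W,S)$, $\operatorname{des}(w)=|\{s\in S: l_S(ws)<l_S(w)\}|$ where $l_S$ is word length, $t(w)=\operatorname{des}(w)+\operatorname{des}(w^{-1})$, and $T_W$ is the random variable $t(w)$ for $w$ uniform in $W$. $\mathrm{A}_n\cong \operatorname{Sym}(n+1)$, $\mathrm{B}_n$ is the hyperoctahedral group of signed permutations of rank $n$, $\mathrm{D}_n$ its index-two subgroup of signed permutations with an even number of negative entries, each with its standard Coxeter generators. *)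

theory Defs
  imports Complex_Main
begin

text \<open>Elements of the Coxeter groups are realised concretely as bijections of int
  (permutations of {1..n+1} for type A; signed permutations of {-n..-1,1..n}
  fixing everything else for types B and D). The group product w s is the
  composition w o s.\<close>

datatype cox_family = TypeA | TypeB | TypeD

definition transp :: "int \<Rightarrow> int \<Rightarrow> int \<Rightarrow> int" where
  "transp a b = (\<lambda>x. if x = a then b else if x = b then a else x)"

definition signed_perms :: "nat \<Rightarrow> (int \<Rightarrow> int) set" where
  "signed_perms n = {w. bij w \<and> (\<forall>x. w (- x) = - w x)
       \<and> (\<forall>x. x \<notin> {- int n..int n} \<longrightarrow> w x = x)}"

definition coxW :: "cox_family \<Rightarrow> nat \<Rightarrow> (int \<Rightarrow> int) set" where
  "coxW F n = (case F of
      TypeA \<Rightarrow> {w. bij_betw w {1..int n + 1} {1..int n + 1}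
                 \<and> (\<forall>x. x \<notin> {1..int n + 1} \<longrightarrow> w x = x)}
    | TypeB \<Rightarrow> signed_perms n
    | TypeD \<Rightarrow> {w \<in> signed_perms n. even (card {i \<in> {1..int n}. w i < 0})})"

definition coxS :: "cox_family \<Rightarrow> nat \<Rightarrow> (int \<Rightarrow> int) set" where
  "coxS F n = (case F of
      TypeA \<Rightarrow> {transp i (i + 1) | i. 1 \<le> i \<and> i \<le> int n}
    | TypeB \<Rightarrow> {transp 1 (-1)} \<union>
               {transp i (i + 1) \<circ> transp (-i) (-(i + 1)) | i. 1 \<le> i \<and> i \<le> int n - 1}
    | TypeD \<Rightarrow> {transp 1 (-2) \<circ> transp (-1) 2} \<union>
               {transp i (i + 1) \<circ> transp (-i) (-(i + 1)) | i. 1 \<le> i \<and> i \<le> int n - 1})"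

definition word_length :: "('a \<Rightarrow> 'a) set \<Rightarrow> ('a \<Rightarrow> 'a) \<Rightarrow> nat" where
  "word_length S w = (LEAST k. \<exists>ws. set ws \<subseteq> S \<and> length ws = k \<and> foldr (\<circ>) ws id = w)"

definition des :: "('a \<Rightarrow> 'a) set \<Rightarrow> ('a \<Rightarrow> 'a) \<Rightarrow> nat" where
  "des S w = card {s \<in> S. word_length S (w \<circ> s) < word_length S w}"

definition tstat :: "('a \<Rightarrow> 'a) set \<Rightarrow> ('a \<Rightarrow> 'a) \<Rightarrow> nat" where
  "tstat S w = des S w + des S (inv w)"

definition T_mean :: "cox_family \<Rightarrow> nat \<Rightarrow> real" where
  "T_mean F n = (\<Sum>w\<in>coxW F n. real (tstat (coxS F n) w)) / real (card (coxW F n))"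

definition T_moment4 :: "cox_family \<Rightarrow> nat \<Rightarrow> real" where
  "T_moment4 F n = (\<Sum>w\<in>coxW F n. (real (tstat (coxS F n) w) - T_mean F n) ^ 4)
                     / real (card (coxW F n))"

end

theory Submission
  imports Defs "HOL-Analysis.Convex"
begin
(* Write T = D + D', where D w counts the right descents of w and D' w = D (w\<inverse>).
   In each family the right descents of a (signed) permutation are read off its one-line
   notation, and an inversion count changes by \<plusminus>k under each generator according to that rule;
   hence it is k times the word length and des counts these descents.  Put Y\<^sub>i = [i is a descent] - 1/2.
   Right multiplication by s\<^sub>i negates Y\<^sub>i and fixes Y\<^sub>j whenever s\<^sub>j is far from s\<^sub>i, so
   E(Y\<^sub>i Y\<^sub>j Y\<^sub>k Y\<^sub>l) vanishes unless the four indices pair up into close pairs; this gives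
   E((D - n/2)\<^sup>4) = O(n\<^sup>2), and D' has the same distribution as D.  For the lower bound let
   Z = \<Sum>\<^sub>i\<^sub>\<in>\<^sub>A Y\<^sub>i for a set A of about n/3 pairwise far indices.  Each E((T - n) Y\<^sub>i) is at least 1/12,
   because D' only decreases along a right descent and two given consecutive descents occur with
   probability 1/6, while E(Z\<^sup>2) = |A|/4.  Two applications of Cauchy-Schwarz then give
   E((T - n)\<^sup>4) \<ge> |A|\<^sup>2/1296. *)

section \<open>Word length\<close>

definition generated :: "('a \<Rightarrow> 'a) set \<Rightarrow> ('a \<Rightarrow> 'a) \<Rightarrow> bool" where
  "generated S x = (\<exists>ws. set ws \<subseteq> S \<and> foldr (\<circ>) ws id = x)"

lemma word_length_le:
  assumes "set ws \<subseteq> S" "foldr (\<circ>) ws id = x"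
  shows "word_length S x \<le> length ws"
  unfolding word_length_def by (rule Least_le) (use assms in blast)

lemma shortest_word_exists:
  assumes "generated S x"
  shows "\<exists>ws. set ws \<subseteq> S \<and> length ws = word_length S x \<and> foldr (\<circ>) ws id = x"
proof -
  from assms obtain ws where "set ws \<subseteq> S" "foldr (\<circ>) ws id = x" unfolding generated_def by blast
  hence "\<exists>k ws. set ws \<subseteq> S \<and> length ws = k \<and> foldr (\<circ>) ws id = x" by blast
  from LeastI_ex[OF this] show ?thesis unfolding word_length_def .
qed

lemma word_length_comp_left_le:
  assumes "generated S x" "t \<in> S"
  shows "word_length S (t \<circ> x) \<le> word_length S x + 1"
proof -
  obtain ws where w: "set ws \<subseteq> S" "length ws = word_length S x" "foldr (\<circ>) ws id = x"
    using shortest_word_exists[OF assms(1)] by blast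
  have "word_length S (t \<circ> x) \<le> length (t # ws)"
    by (rule word_length_le) (use w assms in auto)
  thus ?thesis using w by simp
qed

lemma generated_comp_left: "generated S x \<Longrightarrow> t \<in> S \<Longrightarrow> generated S (t \<circ> x)"
  unfolding generated_def by (metis foldr_Cons insert_subset list.simps(15) o_apply)

lemma foldr_comp_id: "foldr (\<circ>) ws f = foldr (\<circ>) ws id \<circ> f"
  by (induction ws) (auto simp: comp_assoc)

lemma generated_comp_right: "generated S x \<Longrightarrow> t \<in> S \<Longrightarrow> generated S (x \<circ> t)"
proof -
  assume "generated S x" "t \<in> S"
  then obtain ws where "set ws \<subseteq> S" "foldr (\<circ>) ws id = x" unfolding generated_def by blast
  then have "set (ws @ [t]) \<subseteq> S" "foldr (\<circ>) (ws @ [t]) id = x \<circ> t"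
    using \<open>t \<in> S\<close> foldr_comp_id[of ws t] by (auto simp: foldr_append)
  then show ?thesis unfolding generated_def by blast
qed

locale involutive_generators =
  fixes S :: "('a \<Rightarrow> 'a) set"
  assumes gen_invol: "\<And>s. s \<in> S \<Longrightarrow> s \<circ> s = id"
begin

lemma bij_gen: "s \<in> S \<Longrightarrow> bij s"
  using gen_invol by (metis bij_betw_def comp_eq_id_dest inj_on_inverseI o_bij)

lemma inv_gen: "s \<in> S \<Longrightarrow> inv s = s"
  using gen_invol by (metis inv_unique_comp)

lemma bij_foldr_word: "set ws \<subseteq> S \<Longrightarrow> bij (foldr (\<circ>) ws id)"
  by (induction ws) (auto intro: bij_comp bij_gen)

lemma foldr_rev_word: "set ws \<subseteq> S \<Longrightarrow> foldr (\<circ>) (rev ws) id = inv (foldr (\<circ>) ws id)"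
proof (induction ws)
  case Nil thus ?case by simp
next
  case (Cons a ws)
  have e0: "inv (a \<circ> foldr (\<circ>) ws id) = inv (foldr (\<circ>) ws id) \<circ> inv a"
    using Cons.prems by (intro o_inv_distrib bij_gen bij_foldr_word) auto
  have e1: "foldr (\<circ>) (rev (a # ws)) id = foldr (\<circ>) (rev ws) id \<circ> a"
    using foldr_comp_id[of "rev ws" a] by (simp add: foldr_append)
  have e2: "foldr (\<circ>) (a # ws) id = a \<circ> foldr (\<circ>) ws id" by simp
  show ?case unfolding e1 e2 e0 using Cons inv_gen[of a] by (simp only: list.set insert_subset)
qed

lemma bij_if_generated: "generated S x \<Longrightarrow> bij x"
  unfolding generated_def using bij_foldr_word by blast

lemma generated_inv: "generated S x \<Longrightarrow> generated S (inv x)"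
  unfolding generated_def using foldr_rev_word by (metis set_rev)

lemma word_length_inv_le: "generated S x \<Longrightarrow> word_length S (inv x) \<le> word_length S x"
  using shortest_word_exists[of S x] foldr_rev_word word_length_le by (metis length_rev set_rev)

lemma word_length_inv: "generated S x \<Longrightarrow> word_length S (inv x) = word_length S x"
  using word_length_inv_le[of x] word_length_inv_le[of "inv x"] generated_inv[of x] bij_if_generated[of x]
  by (simp add: inv_inv_eq)

lemma des_inv_comp_descent_le:
  assumes gw: "generated S w" and t: "t \<in> S" and dt: "word_length S (w \<circ> t) < word_length S w"
    and finS: "finite S"
  shows "des S (inv (w \<circ> t)) \<le> des S (inv w)"
proof -
  let ?l = "word_length S"
  define u where "u = inv w"
  have gu: "generated S u" using generated_inv gw u_def by blast
  have bw: "bij w" using bij_if_generated gw by blast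
  have inv_wt: "inv (w \<circ> t) = t \<circ> u"
    using bw bij_gen[OF t] inv_gen[OF t] u_def by (simp add: o_inv_distrib)
  have ltu: "?l (t \<circ> u) < ?l u"
  proof -
    have "?l (t \<circ> u) = ?l (inv (w \<circ> t))" using inv_wt by simp
    also have "\<dots> = ?l (w \<circ> t)" using word_length_inv generated_comp_right gw t by blast
    also have "\<dots> < ?l w" by fact
    also have "\<dots> = ?l u" using word_length_inv gw u_def by simp
    finally show ?thesis .
  qed
  have "{s \<in> S. ?l (inv (w \<circ> t) \<circ> s) < ?l (inv (w \<circ> t))} \<subseteq> {s \<in> S. ?l (inv w \<circ> s) < ?l (inv w)}"
  proof safe
    fix s assume s: "s \<in> S" and h: "?l (inv (w \<circ> t) \<circ> s) < ?l (inv (w \<circ> t))"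
    have h': "?l (t \<circ> u \<circ> s) < ?l (t \<circ> u)" using h inv_wt by (simp add: comp_assoc)
    have "u \<circ> s = t \<circ> (t \<circ> u \<circ> s)" using gen_invol[OF t] by (simp add: comp_assoc[symmetric])
    hence "?l (u \<circ> s) \<le> ?l (t \<circ> u \<circ> s) + 1"
      using word_length_comp_left_le[OF _ t, of "t \<circ> u \<circ> s"] generated_comp_left generated_comp_right gu s t by (metis comp_assoc)
    thus "?l (inv w \<circ> s) < ?l (inv w)" using h' ltu u_def by simp
  qed
  thus ?thesis unfolding des_def by (intro card_mono) (use finS in auto)
qed

end

section \<open>Lengths given by a descent rule\<close>

text \<open>\<open>M\<close> is an explicit length such as an inversion count and \<open>C i w\<close> a combinatorial
  criterion for \<open>g i\<close> being a right descent of \<open>w\<close>; the axioms force \<open>M = k * word_length\<close>.\<close>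

locale length_function =
  fixes W :: "('a \<Rightarrow> 'a) set" and g :: "'i \<Rightarrow> ('a \<Rightarrow> 'a)" and I :: "'i set"
    and C :: "'i \<Rightarrow> ('a \<Rightarrow> 'a) \<Rightarrow> bool" and M :: "('a \<Rightarrow> 'a) \<Rightarrow> nat" and k :: nat
  assumes idW: "id \<in> W" and cl: "\<And>w i. w \<in> W \<Longrightarrow> i \<in> I \<Longrightarrow> w \<circ> g i \<in> W"
    and kpos: "k > 0" and M0: "M id = 0"
    and Mdown: "\<And>w i. w \<in> W \<Longrightarrow> i \<in> I \<Longrightarrow> C i w \<Longrightarrow> M (w \<circ> g i) + k = M w"
    and Mup: "\<And>w i. w \<in> W \<Longrightarrow> i \<in> I \<Longrightarrow> \<not> C i w \<Longrightarrow> M (w \<circ> g i) = M w + k"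
    and exdes: "\<And>w. w \<in> W \<Longrightarrow> w \<noteq> id \<Longrightarrow> \<exists>i\<in>I. C i w"
    and ginv: "\<And>i. i \<in> I \<Longrightarrow> g i \<circ> g i = id"
    and ginj: "inj_on g I" and finI: "finite I"
begin

abbreviation "S \<equiv> g ` I"

sublocale involutive_generators S using ginv by unfold_locales auto

lemma word_length_bound:
  "set ws \<subseteq> S \<Longrightarrow> foldr (\<circ>) ws id \<in> W \<and> M (foldr (\<circ>) ws id) \<le> k * length ws"
proof (induction ws rule: rev_induct)
  case Nil
  have e: "foldr (\<circ>) [] (id::'a\<Rightarrow>'a) = id" by simp
  show ?case unfolding e using idW M0 by (metis le0)
next
  case (snoc s ws)
  then obtain i where i: "i \<in> I" "s = g i" by auto
  define x where "x = foldr (\<circ>) ws id"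
  have "set ws \<subseteq> S" using snoc.prems by simp
  note x = snoc.IH[OF this, folded x_def, THEN conjunct1] snoc.IH[OF this, folded x_def, THEN conjunct2]
  have e: "foldr (\<circ>) (ws @ [s]) id = x \<circ> g i" using foldr_comp_id[of ws s] i unfolding x_def by (simp add: foldr_append)
  have "M (x \<circ> g i) \<le> M x + k"
  proof (cases "C i x")
    case True thus ?thesis using Mdown[OF x(1) i(1)] by linarith
  next
    case False thus ?thesis using Mup[OF x(1) i(1)] by linarith
  qed
  hence "M (x \<circ> g i) \<le> k * length (ws @ [s])" using x(2) by simp
  thus ?case unfolding e using cl[OF x(1) i(1)] by blast
qed

lemma length_word_exists:
  "w \<in> W \<Longrightarrow> \<exists>ws. set ws \<subseteq> S \<and> foldr (\<circ>) ws id = w \<and> k * length ws = M w"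
proof (induction "M w" arbitrary: w rule: less_induct)
  case less
  show ?case
  proof (cases "w = id")
    case True thus ?thesis using M0 by (intro exI[of _ "[]"]) auto
  next
    case False
    then obtain i where i: "i \<in> I" "C i w" using exdes less.prems by blast
    have w': "w \<circ> g i \<in> W" using cl less.prems i by blast
    have m: "M (w \<circ> g i) + k = M w" using Mdown less.prems i by blast
    hence "M (w \<circ> g i) < M w" using kpos by simp
    then obtain ws where ws: "set ws \<subseteq> S" "foldr (\<circ>) ws id = w \<circ> g i" "k * length ws = M (w \<circ> g i)"
      using less.hyps w' by blast
    have "foldr (\<circ>) (ws @ [g i]) id = w \<circ> g i \<circ> g i"
      using foldr_comp_id[of ws "g i"] ws by (simp add: foldr_append)
    also have "\<dots> = w" using ginv[OF i(1)] by (simp add: comp_assoc)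
    finally show ?thesis using ws i m by (intro exI[of _ "ws @ [g i]"]) auto
  qed
qed

lemma generated_W: "w \<in> W \<Longrightarrow> generated S w"
  using length_word_exists unfolding generated_def by blast

lemma word_length_eq_M: "w \<in> W \<Longrightarrow> k * word_length S w = M w"
proof -
  assume w: "w \<in> W"
  obtain ws where ws: "set ws \<subseteq> S" "foldr (\<circ>) ws id = w" "k * length ws = M w"
    using length_word_exists w by blast
  have "word_length S w \<le> length ws" using word_length_le ws by blast
  hence a: "k * word_length S w \<le> M w" using ws mult_le_mono2 by metis
  obtain vs where vs: "set vs \<subseteq> S" "length vs = word_length S w" "foldr (\<circ>) vs id = w"
    using shortest_word_exists generated_W w by blast
  have "M w \<le> k * word_length S w" using word_length_bound[OF vs(1)] vs by simp
  with a show ?thesis by simp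
qed

lemma descent_iff: "w \<in> W \<Longrightarrow> i \<in> I \<Longrightarrow> word_length S (w \<circ> g i) < word_length S w \<longleftrightarrow> C i w"
proof -
  assume w: "w \<in> W" and i: "i \<in> I"
  have w': "w \<circ> g i \<in> W" using cl w i by blast
  have "word_length S (w \<circ> g i) < word_length S w \<longleftrightarrow> k * word_length S (w \<circ> g i) < k * word_length S w"
    using kpos by simp
  also have "\<dots> \<longleftrightarrow> M (w \<circ> g i) < M w" using word_length_eq_M w w' by simp
  also have "\<dots> \<longleftrightarrow> C i w" using Mdown[OF w i] Mup[OF w i] kpos by (cases "C i w") auto
  finally show ?thesis .
qed

lemma descent_flip: "w \<in> W \<Longrightarrow> i \<in> I \<Longrightarrow> C i (w \<circ> g i) \<longleftrightarrow> \<not> C i w"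
proof -
  assume w: "w \<in> W" and i: "i \<in> I"
  have w': "w \<circ> g i \<in> W" using cl w i by blast
  have ww: "w \<circ> g i \<circ> g i = w" using ginv[OF i] by (simp add: comp_assoc)
  show ?thesis
  proof (cases "C i w")
    case True
    hence "M (w \<circ> g i) + k = M w" using Mdown[OF w i] by blast
    moreover have "C i (w \<circ> g i) \<Longrightarrow> M w + k = M (w \<circ> g i)" using Mdown[OF w' i] ww by metis
    ultimately have "C i (w \<circ> g i) \<Longrightarrow> False" using kpos by linarith
    thus ?thesis using True by blast
  next
    case False
    hence "M (w \<circ> g i) = M w + k" using Mup[OF w i] by blast
    moreover have "\<not> C i (w \<circ> g i) \<Longrightarrow> M w = M (w \<circ> g i) + k" using Mup[OF w' i] ww by metis
    ultimately have "\<not> C i (w \<circ> g i) \<Longrightarrow> False" using kpos by linarith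
    thus ?thesis using False by blast
  qed
qed

lemma des_eq_card_descents: "w \<in> W \<Longrightarrow> des S w = card {i \<in> I. C i w}"
proof -
  assume w: "w \<in> W"
  have "{s \<in> S. word_length S (w \<circ> s) < word_length S w} = g ` {i \<in> I. C i w}"
    using descent_iff[OF w] by auto
  moreover have "card (g ` {i \<in> I. C i w}) = card {i \<in> I. C i w}"
    by (rule card_image) (use ginj in \<open>auto intro: inj_on_subset\<close>)
  ultimately show ?thesis unfolding des_def by simp
qed

lemma inv_closed: "w \<in> W \<Longrightarrow> inv w \<in> W"
proof -
  assume w: "w \<in> W"
  obtain ws where ws: "set ws \<subseteq> S" "foldr (\<circ>) ws id = w" using length_word_exists w by blast
  have "foldr (\<circ>) (rev ws) id = inv w" using foldr_rev_word ws by blast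
  thus ?thesis using word_length_bound[of "rev ws"] ws by simp
qed

lemma des_inv_descent_mono: "w \<in> W \<Longrightarrow> i \<in> I \<Longrightarrow> C i w \<Longrightarrow> des S (inv (w \<circ> g i)) \<le> des S (inv w)"
  using des_inv_comp_descent_le[of w "g i"] generated_W descent_iff finI by blast

end

section \<open>Fourth moment of the descent statistic\<close>

text \<open>Indices of generators that commute and move disjoint positions; index 0 stands for the
  special generator of types B and D, which only moves \<open>\<plusminus>1\<close> and \<open>\<plusminus>2\<close>.\<close>

definition far :: "int \<Rightarrow> int \<Rightarrow> bool" where
  "far i j \<longleftrightarrow> 2 \<le> \<bar>i - j\<bar> \<and> ((i = 0 \<or> j = 0) \<longrightarrow> 3 \<le> \<bar>i - j\<bar>)"

lemma not_far: "\<not> far i j \<Longrightarrow> \<bar>i - j\<bar> \<le> 2" unfolding far_def by auto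

lemma non_isolated_pairing:
  fixes i j k l :: int
  assumes "\<not>(far i j \<and> far i k \<and> far i l)" "\<not>(far j i \<and> far j k \<and> far j l)"
          "\<not>(far k i \<and> far k j \<and> far k l)" "\<not>(far l i \<and> far l j \<and> far l k)"
  shows "(\<bar>i-j\<bar> \<le> 4 \<and> \<bar>k-l\<bar> \<le> 4) \<or> (\<bar>i-k\<bar> \<le> 4 \<and> \<bar>j-l\<bar> \<le> 4) \<or> (\<bar>i-l\<bar> \<le> 4 \<and> \<bar>j-k\<bar> \<le> 4)"
proof -
  have a: "\<bar>i-j\<bar> \<le> 2 \<or> \<bar>i-k\<bar> \<le> 2 \<or> \<bar>i-l\<bar> \<le> 2" using assms(1) not_far by blast
  have b: "\<bar>j-i\<bar> \<le> 2 \<or> \<bar>j-k\<bar> \<le> 2 \<or> \<bar>j-l\<bar> \<le> 2" using assms(2) not_far by blast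
  have c: "\<bar>k-i\<bar> \<le> 2 \<or> \<bar>k-j\<bar> \<le> 2 \<or> \<bar>k-l\<bar> \<le> 2" using assms(3) not_far by blast
  have d: "\<bar>l-i\<bar> \<le> 2 \<or> \<bar>l-j\<bar> \<le> 2 \<or> \<bar>l-k\<bar> \<le> 2" using assms(4) not_far by blast
  show ?thesis using a b c d by (smt (verit))
qed

lemma sum_power4_expand:
  fixes a :: "'i \<Rightarrow> real"
  shows "(\<Sum>i\<in>I. a i) ^ 4 = (\<Sum>i\<in>I. \<Sum>j\<in>I. \<Sum>k\<in>I. \<Sum>l\<in>I. a i * a j * a k * a l)"
  by (simp only: sum_distrib_left[symmetric] sum_distrib_right[symmetric] power4_eq_xxxx)

lemma sum4_pairing_ij_kl:
  fixes B :: "'i \<Rightarrow> 'i \<Rightarrow> real"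
  shows "(\<Sum>i\<in>I. \<Sum>j\<in>I. \<Sum>k\<in>I. \<Sum>l\<in>I. B i j * B k l) = (\<Sum>i\<in>I. \<Sum>j\<in>I. B i j)^2"
  by (simp only: sum_distrib_left[symmetric] sum_distrib_right[symmetric] power2_eq_square)

lemma sum4_pairing_ik_jl:
  fixes B :: "'i \<Rightarrow> 'i \<Rightarrow> real"
  shows "(\<Sum>i\<in>I. \<Sum>j\<in>I. \<Sum>k\<in>I. \<Sum>l\<in>I. B i k * B j l) = (\<Sum>i\<in>I. \<Sum>j\<in>I. B i j)^2"
proof -
  have "(\<Sum>i\<in>I. \<Sum>j\<in>I. \<Sum>k\<in>I. \<Sum>l\<in>I. B i k * B j l) = (\<Sum>i\<in>I. \<Sum>k\<in>I. \<Sum>j\<in>I. \<Sum>l\<in>I. B i k * B j l)"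
    by (rule sum.cong[OF refl], rule sum.swap)
  also have "\<dots> = (\<Sum>i\<in>I. \<Sum>j\<in>I. B i j)^2" by (rule sum4_pairing_ij_kl)
  finally show ?thesis .
qed

lemma sum4_pairing_il_jk:
  fixes B :: "'i \<Rightarrow> 'i \<Rightarrow> real"
  shows "(\<Sum>i\<in>I. \<Sum>j\<in>I. \<Sum>k\<in>I. \<Sum>l\<in>I. B i l * B j k) = (\<Sum>i\<in>I. \<Sum>j\<in>I. B i j)^2"
proof -
  have "(\<Sum>i\<in>I. \<Sum>j\<in>I. \<Sum>k\<in>I. \<Sum>l\<in>I. B i l * B j k) = (\<Sum>i\<in>I. \<Sum>j\<in>I. \<Sum>l\<in>I. \<Sum>k\<in>I. B i l * B j k)"
    by (rule sum.cong[OF refl], rule sum.cong[OF refl], rule sum.swap)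
  also have "\<dots> = (\<Sum>i\<in>I. \<Sum>l\<in>I. \<Sum>j\<in>I. \<Sum>k\<in>I. B i l * B j k)"
    by (rule sum.cong[OF refl], rule sum.swap)
  also have "\<dots> = (\<Sum>i\<in>I. \<Sum>j\<in>I. B i j)^2" by (rule sum4_pairing_ij_kl)
  finally show ?thesis .
qed

lemma add_power4_le: "(a + b :: real) ^ 4 \<le> 8 * (a ^ 4 + b ^ 4)"
proof -
  have 1: "(a + b)^2 \<le> 2 * (a^2 + b^2)" using sum_squares_ge_zero[of "a - b" 0]
    by (simp add: power2_eq_square algebra_simps)
  have "(a + b)^4 = ((a+b)^2)^2" by simp
  also have "\<dots> \<le> (2 * (a^2 + b^2))^2" using 1 by (intro power_mono) auto
  also have "\<dots> \<le> 8 * (a^4 + b^4)"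
  proof -
    have "0 \<le> (a^2 - b^2)^2" by simp
    thus ?thesis by (simp add: power2_eq_square power4_eq_xxxx algebra_simps)
  qed
  finally show ?thesis .
qed

lemma sum_near_le_9: "finite I \<Longrightarrow> (\<Sum>j\<in>I. of_bool (\<bar>i - j\<bar> \<le> (4::int)) :: real) \<le> 9"
proof -
  assume f: "finite I"
  have "(\<Sum>j\<in>I. of_bool (\<bar>i - j\<bar> \<le> (4::int)) :: real) = card (I \<inter> {j. \<bar>i - j\<bar> \<le> 4})" using f by simp
  also have "card (I \<inter> {j. \<bar>i - j\<bar> \<le> 4}) \<le> card {i - 4..i + 4}"
    by (rule card_mono) auto
  finally show ?thesis by simp
qed

text \<open>\<open>Dinv w\<close> plays the part of the number of descents of \<open>w\<inverse>\<close>; only its equidistribution with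
  the descent number and its monotonicity along descents are used.\<close>

locale descent_statistics =
  fixes W :: "(int \<Rightarrow> int) set" and g :: "int \<Rightarrow> int \<Rightarrow> int" and I :: "int set"
    and C :: "int \<Rightarrow> (int \<Rightarrow> int) \<Rightarrow> bool" and Dinv :: "(int \<Rightarrow> int) \<Rightarrow> nat" and A :: "int set"
  assumes finW: "finite W" and neW: "W \<noteq> {}" and finI: "finite I"
    and cl: "\<And>w i. w \<in> W \<Longrightarrow> i \<in> I \<Longrightarrow> w \<circ> g i \<in> W"
    and ginv: "\<And>i. i \<in> I \<Longrightarrow> g i \<circ> g i = id"
    and flip: "\<And>w i. w \<in> W \<Longrightarrow> i \<in> I \<Longrightarrow> C i (w \<circ> g i) \<longleftrightarrow> \<not> C i w"
    and farinv: "\<And>w i j. w \<in> W \<Longrightarrow> i \<in> I \<Longrightarrow> j \<in> I \<Longrightarrow> far i j \<Longrightarrow> C j (w \<circ> g i) \<longleftrightarrow> C j w"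
    and Dinv_descent_mono: "\<And>w i. w \<in> W \<Longrightarrow> i \<in> I \<Longrightarrow> C i w \<Longrightarrow> Dinv (w \<circ> g i) \<le> Dinv w"
    and Dinv_distrib: "\<And>h::nat \<Rightarrow> real. (\<Sum>w\<in>W. h (Dinv w)) = (\<Sum>w\<in>W. h (card {i\<in>I. C i w}))"
    and AI: "A \<subseteq> I"
    and A_neighbours: "\<And>i. i \<in> A \<Longrightarrow> i - 1 \<in> I \<and> i + 1 \<in> I"
    and A_far: "\<And>i j. i \<in> A \<Longrightarrow> j \<in> I \<Longrightarrow> j \<notin> {i - 1, i, i + 1} \<Longrightarrow> far i j"
    and A_pairwise_far: "\<And>i j. i \<in> A \<Longrightarrow> j \<in> A \<Longrightarrow> i \<noteq> j \<Longrightarrow> far i j"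
    and double_descent_below: "\<And>i. i \<in> A \<Longrightarrow> 6 * card {w\<in>W. C (i - 1) w \<and> C i w} = card W"
    and double_descent_above: "\<And>i. i \<in> A \<Longrightarrow> 6 * card {w\<in>W. C i w \<and> C (i + 1) w} = card W"
begin

definition X :: "int \<Rightarrow> (int \<Rightarrow> int) \<Rightarrow> real" where "X i w = of_bool (C i w)"
definition Y :: "int \<Rightarrow> (int \<Rightarrow> int) \<Rightarrow> real" where "Y i w = X i w - 1/2"
definition D :: "(int \<Rightarrow> int) \<Rightarrow> real" where "D w = real (card {i\<in>I. C i w})"
definition T :: "(int \<Rightarrow> int) \<Rightarrow> real" where "T w = D w + real (Dinv w)"

lemma sum_comp_gen: "i \<in> I \<Longrightarrow> (\<Sum>w\<in>W. f (w \<circ> g i)) = (\<Sum>w\<in>W. f w)"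
  by (rule sum.reindex_bij_witness[of _ "\<lambda>w. w \<circ> g i" "\<lambda>w. w \<circ> g i"])
     (auto simp: cl comp_assoc ginv)

lemma Y_flip: "w \<in> W \<Longrightarrow> i \<in> I \<Longrightarrow> Y i (w \<circ> g i) = - Y i w"
  by (simp add: Y_def X_def flip)

lemma Y_far: "w \<in> W \<Longrightarrow> i \<in> I \<Longrightarrow> j \<in> I \<Longrightarrow> far i j \<Longrightarrow> Y j (w \<circ> g i) = Y j w"
  by (simp add: Y_def X_def farinv)

lemma sum_Y_mult_invariant:
  assumes i: "i \<in> I" and h: "\<And>w. w \<in> W \<Longrightarrow> h (w \<circ> g i) = h w"
  shows "(\<Sum>w\<in>W. Y i w * h w) = 0"
proof -
  have "(\<Sum>w\<in>W. Y i w * h w) = (\<Sum>w\<in>W. Y i (w \<circ> g i) * h (w \<circ> g i))"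
    using sum_comp_gen[OF i, of "\<lambda>w. Y i w * h w"] by simp
  also have "\<dots> = (\<Sum>w\<in>W. - (Y i w * h w))" using i h by (intro sum.cong) (auto simp: Y_flip)
  finally show ?thesis by (simp add: sum_negf)
qed

lemma sum_Y: "i \<in> I \<Longrightarrow> (\<Sum>w\<in>W. Y i w) = 0"
  using sum_Y_mult_invariant[of i "\<lambda>_. 1"] by simp

lemma sum_X: "i \<in> I \<Longrightarrow> (\<Sum>w\<in>W. X i w) = card W / 2"
  using sum_Y[of i] unfolding Y_def by (simp add: sum_subtractf)

lemma Y_mult_self: "Y i w * Y i w = 1/4"
  by (simp add: Y_def X_def)

lemma abs_Y: "\<bar>Y i w\<bar> = 1/2"
  by (simp add: Y_def X_def)

lemma sum_Y_mult_self: "(\<Sum>w\<in>W. Y i w * Y i w) = card W / 4"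
  by (simp add: Y_mult_self)

lemma sum_Y_mult_far: "i \<in> I \<Longrightarrow> j \<in> I \<Longrightarrow> far i j \<Longrightarrow> (\<Sum>w\<in>W. Y i w * Y j w) = 0"
  by (rule sum_Y_mult_invariant) (auto simp: Y_far)

lemma sum_X_mult_X: "(\<Sum>w\<in>W. X i w * X j w) = card {w\<in>W. C i w \<and> C j w}"
proof -
  have "(\<Sum>w\<in>W. X i w * X j w) = (\<Sum>w\<in>W. of_bool (C i w \<and> C j w))"
    by (intro sum.cong) (auto simp: X_def)
  also have "\<dots> = card {w\<in>W. C i w \<and> C j w}" using finW by (simp add: Int_def conj_commute)
  finally show ?thesis .
qed

lemma sum_Y_mult_Y: "i \<in> I \<Longrightarrow> j \<in> I \<Longrightarrow>
   (\<Sum>w\<in>W. Y i w * Y j w) = card {w\<in>W. C i w \<and> C j w} - card W / 4"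
proof -
  assume ij: "i \<in> I" "j \<in> I"
  have "(\<Sum>w\<in>W. Y i w * Y j w) = (\<Sum>w\<in>W. X i w * X j w - X i w / 2 - X j w / 2 + 1/4)"
    by (intro sum.cong) (auto simp: Y_def algebra_simps)
  also have "\<dots> = (\<Sum>w\<in>W. X i w * X j w) - (\<Sum>w\<in>W. X i w) / 2 - (\<Sum>w\<in>W. X j w) / 2 + card W / 4"
    by (simp add: sum.distrib sum_subtractf sum_divide_distrib)
  finally show ?thesis using sum_X ij sum_X_mult_X by simp
qed

lemma D_eq_sum_X: "D w = (\<Sum>i\<in>I. X i w)"
  using finI by (simp add: D_def X_def Int_def)

lemma D_centred_eq_sum_Y: "D w - card I / 2 = (\<Sum>i\<in>I. Y i w)"
  by (simp add: D_eq_sum_X Y_def sum_subtractf)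

lemma sum_D: "(\<Sum>w\<in>W. D w) = card I * card W / 2"
proof -
  have "(\<Sum>w\<in>W. D w) = (\<Sum>i\<in>I. \<Sum>w\<in>W. X i w)" by (simp add: D_eq_sum_X sum.swap[of _ W])
  also have "\<dots> = (\<Sum>i\<in>I. card W / 2)" by (intro sum.cong) (auto simp: sum_X)
  finally show ?thesis by simp
qed

lemma sum_Dinv: "(\<Sum>w\<in>W. real (Dinv w)) = (\<Sum>w\<in>W. D w)"
  using Dinv_distrib[of real] by (simp add: D_def)

lemma sum_T: "(\<Sum>w\<in>W. T w) = card I * card W"
  by (simp add: T_def sum.distrib sum_Dinv sum_D)

lemma sum_Y_mult_Dinv_nonneg: "i \<in> I \<Longrightarrow> (\<Sum>w\<in>W. Y i w * real (Dinv w)) \<ge> 0"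
proof -
  assume i: "i \<in> I"
  let ?S = "(\<Sum>w\<in>W. Y i w * real (Dinv w))"
  have "?S = (\<Sum>w\<in>W. Y i (w \<circ> g i) * real (Dinv (w \<circ> g i)))"
    using sum_comp_gen[OF i, of "\<lambda>w. Y i w * real (Dinv w)"] by simp
  also have "\<dots> = (\<Sum>w\<in>W. - (Y i w * real (Dinv (w \<circ> g i))))" using i by (intro sum.cong) (auto simp: Y_flip)
  finally have "2 * ?S = (\<Sum>w\<in>W. Y i w * (real (Dinv w) - real (Dinv (w \<circ> g i))))"
    by (simp add: sum_negf algebra_simps sum_subtractf)
  also have "\<dots> \<ge> 0"
  proof (rule sum_nonneg)
    fix w assume w: "w \<in> W"
    show "Y i w * (real (Dinv w) - real (Dinv (w \<circ> g i))) \<ge> 0"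
    proof (cases "C i w")
      case True thus ?thesis using Dinv_descent_mono[OF w i True] by (simp add: Y_def X_def)
    next
      case False
      hence "C i (w \<circ> g i)" using flip w i by blast
      hence "Dinv (w \<circ> g i \<circ> g i) \<le> Dinv (w \<circ> g i)" using Dinv_descent_mono cl w i by blast
      hence "Dinv w \<le> Dinv (w \<circ> g i)" using ginv[OF i] by (simp add: comp_assoc)
      thus ?thesis using False by (simp add: Y_def X_def)
    qed
  qed
  finally show ?thesis by simp
qed

text \<open>Only \<open>i - 1\<close>, \<open>i\<close>, \<open>i + 1\<close> contribute: \<open>(1/6 - 1/4) + 1/4 + (1/6 - 1/4) = 1/12\<close>.\<close>

lemma sum_Y_mult_D: "i \<in> A \<Longrightarrow> (\<Sum>w\<in>W. Y i w * D w) = card W / 12"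
proof -
  assume iA: "i \<in> A"
  have iI: "i \<in> I" "i - 1 \<in> I" "i + 1 \<in> I" using AI iA A_neighbours by auto
  have "(\<Sum>w\<in>W. Y i w * D w) = (\<Sum>j\<in>I. \<Sum>w\<in>W. Y i w * X j w)"
    by (simp add: D_eq_sum_X sum_distrib_left sum.swap[of _ W])
  also have "\<dots> = (\<Sum>j\<in>I. \<Sum>w\<in>W. Y i w * Y j w)"
  proof (rule sum.cong[OF refl])
    fix j assume j: "j \<in> I"
    have "(\<Sum>w\<in>W. Y i w * X j w) = (\<Sum>w\<in>W. Y i w * Y j w + Y i w / 2)"
      by (intro sum.cong) (auto simp: Y_def[of j] right_diff_distrib)
    also have "\<dots> = (\<Sum>w\<in>W. Y i w * Y j w)"
      using sum_Y[OF iI(1)] by (simp add: sum.distrib flip: sum_divide_distrib)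
    finally show "(\<Sum>w\<in>W. Y i w * X j w) = (\<Sum>w\<in>W. Y i w * Y j w)" .
  qed
  also have "\<dots> = (\<Sum>j\<in>{i - 1, i, i + 1}. \<Sum>w\<in>W. Y i w * Y j w)"
  proof (rule sum.mono_neutral_right)
    show "finite I" by (rule finI)
    show "{i - 1, i, i + 1} \<subseteq> I" using iI by auto
    show "\<forall>j\<in>I - {i - 1, i, i + 1}. (\<Sum>w\<in>W. Y i w * Y j w) = 0"
      using sum_Y_mult_far A_far iA iI by auto
  qed
  also have "\<dots> = (\<Sum>w\<in>W. Y i w * Y (i - 1) w) + (\<Sum>w\<in>W. Y i w * Y i w) + (\<Sum>w\<in>W. Y i w * Y (i + 1) w)"
    by simp
  also have "\<dots> = card W / 12"
    using sum_Y_mult_Y[of i "i - 1"] sum_Y_mult_Y[of i "i + 1"] sum_Y_mult_self[of i] iI double_descent_below[OF iA] double_descent_above[OF iA]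
    by (simp add: conj_commute)
  finally show ?thesis .
qed

definition U :: "(int \<Rightarrow> int) \<Rightarrow> real" where "U w = T w - card I"
definition Z :: "(int \<Rightarrow> int) \<Rightarrow> real" where "Z w = (\<Sum>i\<in>A. Y i w)"

lemma finite_A: "finite A" using finite_subset[OF AI finI] .

lemma sum_U_mult_Y: "i \<in> A \<Longrightarrow> (\<Sum>w\<in>W. U w * Y i w) \<ge> card W / 12"
proof -
  assume iA: "i \<in> A"
  have iI: "i \<in> I" using AI iA by auto
  have "(\<Sum>w\<in>W. U w * Y i w) = (\<Sum>w\<in>W. Y i w * D w) + (\<Sum>w\<in>W. Y i w * real (Dinv w)) - card I * (\<Sum>w\<in>W. Y i w)"
    by (simp add: U_def T_def algebra_simps sum.distrib sum_subtractf sum_distrib_left)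
  thus ?thesis using sum_Y_mult_D[OF iA] sum_Y_mult_Dinv_nonneg[OF iI] sum_Y[OF iI] by simp
qed

lemma sum_U_mult_Z: "(\<Sum>w\<in>W. U w * Z w) \<ge> card A * card W / 12"
proof -
  have "(\<Sum>w\<in>W. U w * Z w) = (\<Sum>i\<in>A. \<Sum>w\<in>W. U w * Y i w)"
    by (simp add: Z_def sum_distrib_left sum.swap[of _ W])
  also have "\<dots> \<ge> (\<Sum>i\<in>A. card W / 12)" by (rule sum_mono) (use sum_U_mult_Y in auto)
  finally show ?thesis by simp
qed

lemma sum_Z_mult_Z: "(\<Sum>w\<in>W. Z w * Z w) = card A * card W / 4"
proof -
  have "(\<Sum>w\<in>W. Z w * Z w) = (\<Sum>i\<in>A. \<Sum>j\<in>A. \<Sum>w\<in>W. Y i w * Y j w)"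
    by (simp add: Z_def sum_product sum.swap[of _ W])
  also have "\<dots> = (\<Sum>i\<in>A. card W / 4)"
  proof (rule sum.cong[OF refl])
    fix i assume iA: "i \<in> A"
    have "(\<Sum>j\<in>A. \<Sum>w\<in>W. Y i w * Y j w) = (\<Sum>j\<in>{i}. \<Sum>w\<in>W. Y i w * Y j w)"
    proof (rule sum.mono_neutral_right)
      show "finite A" by (rule finite_A)
      show "{i} \<subseteq> A" using iA by auto
      show "\<forall>j\<in>A - {i}. (\<Sum>w\<in>W. Y i w * Y j w) = 0" using sum_Y_mult_far A_pairwise_far iA AI by blast
    qed
    also have "\<dots> = card W / 4" using sum_Y_mult_self by simp
    finally show "(\<Sum>j\<in>A. \<Sum>w\<in>W. Y i w * Y j w) = card W / 4" .
  qed
  finally show ?thesis by simp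
qed

text \<open>Cauchy-Schwarz against \<open>Z\<close>, then against the constant 1.\<close>

lemma sum_U_power4_lower: "(\<Sum>w\<in>W. U w ^ 4) \<ge> (card A)^2 * card W / 1296"
proof (cases "A = {}")
  case True thus ?thesis by (simp add: sum_nonneg)
next
  case False
  have Apos: "real (card A) > 0" using False finite_A by (simp add: card_gt_0_iff)
  have Npos: "real (card W) > 0" using neW finW by (simp add: card_gt_0_iff)
  define a where "a = (\<Sum>w\<in>W. U w * Z w)"
  define b where "b = (\<Sum>w\<in>W. (U w)^2)"
  define z where "z = (\<Sum>w\<in>W. (Z w)^2)"
  have cs: "a^2 \<le> b * z" unfolding a_def b_def z_def by (rule Cauchy_Schwarz_ineq_sum)
  have z: "z = card A * card W / 4" unfolding z_def using sum_Z_mult_Z by (simp add: power2_eq_square)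
  have a: "a \<ge> card A * card W / 12" unfolding a_def by (rule sum_U_mult_Z)
  have "(card A * card W / 12)^2 \<le> a^2" using a Apos Npos by (intro power_mono) auto
  hence "(card A * card W / 12)^2 \<le> b * (card A * card W / 4)" using cs z by simp
  hence "(card A * card W) * (card A * card W) \<le> (card A * card W) * (36 * b)"
    by (simp add: power2_eq_square algebra_simps)
  hence b: "card A * card W / 36 \<le> b" using Apos Npos by (simp add: mult_le_cancel_left_pos)
  have cs2: "b^2 \<le> (\<Sum>w\<in>W. (U w ^ 4)) * card W"
    using Cauchy_Schwarz_ineq_sum[of "\<lambda>w. (U w)^2" "\<lambda>_. 1" W] unfolding b_def
    by (simp add: power2_eq_square power4_eq_xxxx mult.assoc)
  have "(card A * card W / 36)^2 \<le> b^2" using b Apos Npos by (intro power_mono) auto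
  hence "(card A * card W / 36)^2 \<le> (\<Sum>w\<in>W. (U w ^ 4)) * card W" using cs2 by linarith
  hence "card W * ((card A)^2 * card W / 1296) \<le> card W * (\<Sum>w\<in>W. (U w ^ 4))"
    by (simp add: power2_eq_square algebra_simps)
  thus ?thesis using Npos by (simp add: mult_le_cancel_left_pos)
qed

definition Q :: "int \<Rightarrow> int \<Rightarrow> int \<Rightarrow> int \<Rightarrow> real" where
  "Q i j k l = (\<Sum>w\<in>W. Y i w * Y j w * Y k w * Y l w)"

lemma Q_isolated: "i \<in> I \<Longrightarrow> j \<in> I \<Longrightarrow> k \<in> I \<Longrightarrow> l \<in> I \<Longrightarrow> far i j \<Longrightarrow> far i k \<Longrightarrow> far i l \<Longrightarrow> Q i j k l = 0"
  unfolding Q_def mult.assoc by (rule sum_Y_mult_invariant) (auto simp: Y_far)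

lemma Q_sym1: "Q i j k l = Q j i k l" unfolding Q_def by (simp add: ac_simps)
lemma Q_sym2: "Q i j k l = Q k j i l" unfolding Q_def by (simp add: ac_simps)
lemma Q_sym3: "Q i j k l = Q l j k i" unfolding Q_def by (simp add: ac_simps)

lemma abs_Q_le: "\<bar>Q i j k l\<bar> \<le> card W / 16"
proof -
  have "\<bar>Q i j k l\<bar> \<le> (\<Sum>w\<in>W. \<bar>Y i w * Y j w * Y k w * Y l w\<bar>)" unfolding Q_def by (rule sum_abs)
  also have "\<dots> = (\<Sum>w\<in>W. 1/16)" by (simp add: abs_mult abs_Y)
  finally show ?thesis by simp
qed

definition B :: "int \<Rightarrow> int \<Rightarrow> real" where "B i j = of_bool (\<bar>i - j\<bar> \<le> 4)"

lemma abs_Q_le_pairings: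
  assumes "i \<in> I" "j \<in> I" "k \<in> I" "l \<in> I"
  shows "\<bar>Q i j k l\<bar> \<le> card W / 16 * (B i j * B k l + B i k * B j l + B i l * B j k)"
proof (cases "(far i j \<and> far i k \<and> far i l) \<or> (far j i \<and> far j k \<and> far j l) \<or>
              (far k i \<and> far k j \<and> far k l) \<or> (far l i \<and> far l j \<and> far l k)")
  case True
  hence "Q i j k l = 0" using Q_isolated assms Q_sym1 Q_sym2 Q_sym3 by metis
  thus ?thesis by (simp add: B_def)
next
  case False
  hence "(\<bar>i-j\<bar> \<le> 4 \<and> \<bar>k-l\<bar> \<le> 4) \<or> (\<bar>i-k\<bar> \<le> 4 \<and> \<bar>j-l\<bar> \<le> 4) \<or> (\<bar>i-l\<bar> \<le> 4 \<and> \<bar>j-k\<bar> \<le> 4)"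
    using non_isolated_pairing by blast
  hence "1 \<le> B i j * B k l + B i k * B j l + B i l * B j k" by (auto simp: B_def)
  moreover have "card W / 16 \<ge> (0::real)" by simp
  ultimately have "card W / 16 \<le> card W / 16 * (B i j * B k l + B i k * B j l + B i l * B j k)"
    by (metis mult.right_neutral mult_left_mono)
  thus ?thesis using abs_Q_le[of i j k l] by linarith
qed

lemma sum_B_le: "(\<Sum>i\<in>I. \<Sum>j\<in>I. B i j) \<le> 9 * real (card I)"
proof -
  have "(\<Sum>i\<in>I. \<Sum>j\<in>I. B i j) \<le> (\<Sum>i\<in>I. 9)"
    by (rule sum_mono) (use sum_near_le_9[OF finI] in \<open>auto simp: B_def\<close>)
  thus ?thesis by simp
qed

lemma sum_D_centred_power4_upper: "(\<Sum>w\<in>W. (D w - card I / 2) ^ 4) \<le> 243 / 16 * (card I)^2 * card W"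
proof -
  have "(\<Sum>w\<in>W. (D w - card I / 2) ^ 4) = (\<Sum>i\<in>I. \<Sum>j\<in>I. \<Sum>k\<in>I. \<Sum>l\<in>I. Q i j k l)"
    by (simp add: D_centred_eq_sum_Y sum_power4_expand Q_def sum.swap[of _ W])
  also have "\<dots> \<le> (\<Sum>i\<in>I. \<Sum>j\<in>I. \<Sum>k\<in>I. \<Sum>l\<in>I. card W / 16 * (B i j * B k l + B i k * B j l + B i l * B j k))"
    by (intro sum_mono) (meson abs_Q_le_pairings abs_le_D1)
  also have "\<dots> = card W / 16 * (\<Sum>i\<in>I. \<Sum>j\<in>I. \<Sum>k\<in>I. \<Sum>l\<in>I. B i j * B k l)
     + card W / 16 * (\<Sum>i\<in>I. \<Sum>j\<in>I. \<Sum>k\<in>I. \<Sum>l\<in>I. B i k * B j l)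
     + card W / 16 * (\<Sum>i\<in>I. \<Sum>j\<in>I. \<Sum>k\<in>I. \<Sum>l\<in>I. B i l * B j k)"
    by (simp add: sum_distrib_left sum.distrib distrib_left)
  also have "\<dots> = card W / 16 * (3 * (\<Sum>i\<in>I. \<Sum>j\<in>I. B i j)^2)"
    by (simp only: sum4_pairing_ij_kl sum4_pairing_ik_jl sum4_pairing_il_jk)
  also have "\<dots> \<le> card W / 16 * (3 * (9 * real (card I))^2)"
  proof -
    have "0 \<le> (\<Sum>i\<in>I. \<Sum>j\<in>I. B i j)" by (intro sum_nonneg) (auto simp: B_def)
    hence "(\<Sum>i\<in>I. \<Sum>j\<in>I. B i j)^2 \<le> (9 * real (card I))^2" using sum_B_le by (intro power_mono) auto
    thus ?thesis by (intro mult_left_mono) auto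
  qed
  also have "\<dots> = 243 / 16 * (card I)^2 * card W" by (simp add: power2_eq_square)
  finally show ?thesis .
qed

lemma sum_U_power4_upper: "(\<Sum>w\<in>W. U w ^ 4) \<le> 243 * (card I)^2 * card W"
proof -
  have "(\<Sum>w\<in>W. U w ^ 4) \<le> (\<Sum>w\<in>W. 8 * ((D w - card I / 2) ^ 4 + (real (Dinv w) - card I / 2) ^ 4))"
  proof (rule sum_mono)
    fix w
    have e: "U w = (D w - card I / 2) + (real (Dinv w) - card I / 2)" by (simp add: U_def T_def)
    show "U w ^ 4 \<le> 8 * ((D w - card I / 2) ^ 4 + (real (Dinv w) - card I / 2) ^ 4)"
      by (subst e) (rule add_power4_le)
  qed
  also have "\<dots> = 8 * (\<Sum>w\<in>W. (D w - card I / 2) ^ 4) + 8 * (\<Sum>w\<in>W. (real (Dinv w) - card I / 2) ^ 4)"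
    by (simp add: sum.distrib sum_distrib_left)
  also have "(\<Sum>w\<in>W. (real (Dinv w) - card I / 2) ^ 4) = (\<Sum>w\<in>W. (D w - card I / 2) ^ 4)"
    using Dinv_distrib[of "\<lambda>k. (real k - card I / 2) ^ 4"] by (simp add: D_def)
  finally have "(\<Sum>w\<in>W. U w ^ 4) \<le> 16 * (\<Sum>w\<in>W. (D w - card I / 2) ^ 4)" by simp
  also have "\<dots> \<le> 16 * (243 / 16 * (card I)^2 * card W)" using sum_D_centred_power4_upper by linarith
  finally show ?thesis by (simp add: ac_simps)
qed

end

locale descent_model = length_function W g I C M k
  for W :: "(int \<Rightarrow> int) set" and g :: "int \<Rightarrow> int \<Rightarrow> int" and I :: "int set"
    and C :: "int \<Rightarrow> (int \<Rightarrow> int) \<Rightarrow> bool" and M k +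
  fixes A :: "int set"
  assumes finW: "finite W"
    and farinv: "\<And>w i j. w \<in> W \<Longrightarrow> i \<in> I \<Longrightarrow> j \<in> I \<Longrightarrow> far i j \<Longrightarrow> C j (w \<circ> g i) \<longleftrightarrow> C j w"
    and AI: "A \<subseteq> I"
    and A_neighbours: "\<And>i. i \<in> A \<Longrightarrow> i - 1 \<in> I \<and> i + 1 \<in> I"
    and A_far: "\<And>i j. i \<in> A \<Longrightarrow> j \<in> I \<Longrightarrow> j \<notin> {i - 1, i, i + 1} \<Longrightarrow> far i j"
    and A_pairwise_far: "\<And>i j. i \<in> A \<Longrightarrow> j \<in> A \<Longrightarrow> i \<noteq> j \<Longrightarrow> far i j"
    and double_descent_below: "\<And>i. i \<in> A \<Longrightarrow> 6 * card {w\<in>W. C (i - 1) w \<and> C i w} = card W"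
    and double_descent_above: "\<And>i. i \<in> A \<Longrightarrow> 6 * card {w\<in>W. C i w \<and> C (i + 1) w} = card W"
begin

lemma inv_inv_W: "w \<in> W \<Longrightarrow> inv (inv w) = w"
  using generated_W bij_if_generated inv_inv_eq by blast

lemma Dinv_distrib: "(\<Sum>w\<in>W. h (des S (inv w))) = (\<Sum>w\<in>W. h (card {i\<in>I. C i w}))"
proof -
  have "(\<Sum>w\<in>W. h (des S (inv w))) = (\<Sum>w\<in>W. h (card {i\<in>I. C i (inv w)}))"
    by (intro sum.cong refl) (simp add: des_eq_card_descents inv_closed)
  also have "\<dots> = (\<Sum>w\<in>W. h (card {i\<in>I. C i w}))"
    by (rule sum.reindex_bij_witness[of _ inv inv]) (auto simp: inv_closed inv_inv_W)
  finally show ?thesis .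
qed

sublocale stats: descent_statistics W g I C "\<lambda>w. des S (inv w)" A
proof
  show "finite W" by (rule finW)
  show "W \<noteq> {}" using idW by blast
  show "finite I" by (rule finI)
qed (auto simp: cl ginv descent_flip farinv des_inv_descent_mono Dinv_distrib AI A_neighbours A_far A_pairwise_far double_descent_below double_descent_above)

lemma tstat_eq_T: "w \<in> W \<Longrightarrow> real (tstat S w) = stats.T w"
  unfolding tstat_def stats.T_def stats.D_def by (simp add: des_eq_card_descents)

lemma tstat_mean: "(\<Sum>w\<in>W. real (tstat S w)) / card W = card I"
proof -
  have "(\<Sum>w\<in>W. real (tstat S w)) = (\<Sum>w\<in>W. stats.T w)" by (intro sum.cong) (auto simp: tstat_eq_T)
  also have "\<dots> = card I * card W" by (rule stats.sum_T)
  finally show ?thesis using finW idW by (auto simp: card_gt_0_iff)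
qed

lemma tstat_centred_power4: "(\<Sum>w\<in>W. (real (tstat S w) - card I) ^ 4) = (\<Sum>w\<in>W. stats.U w ^ 4)"
  by (intro sum.cong) (auto simp: tstat_eq_T stats.U_def)

lemma moment4_bounds:
  "(card A)^2 / 1296 \<le> (\<Sum>w\<in>W. (real (tstat S w) - card I) ^ 4) / card W"
  "(\<Sum>w\<in>W. (real (tstat S w) - card I) ^ 4) / card W \<le> 243 * (card I)^2"
proof -
  have Npos: "real (card W) > 0" using finW idW by (auto simp: card_gt_0_iff)
  show "(card A)^2 / 1296 \<le> (\<Sum>w\<in>W. (real (tstat S w) - card I) ^ 4) / card W"
    using stats.sum_U_power4_lower Npos unfolding tstat_centred_power4 by (simp add: field_simps)
  show "(\<Sum>w\<in>W. (real (tstat S w) - card I) ^ 4) / card W \<le> 243 * (card I)^2"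
    using stats.sum_U_power4_upper Npos unfolding tstat_centred_power4 by (simp add: field_simps)
qed

end

lemma T_moment4_bounds:
  assumes cf: "descent_model (coxW F n) g I C M k A" and S: "coxS F n = g ` I" and cI: "card I = n"
    and cA: "real n / 4 \<le> real (card A)"
  shows "real n ^ 2 / 20736 \<le> T_moment4 F n \<and> T_moment4 F n \<le> 243 * real n ^ 2"
proof -
  interpret descent_model "coxW F n" g I C M k A by (rule cf)
  have "T_mean F n = card I" unfolding T_mean_def S by (rule tstat_mean)
  then have m4: "T_moment4 F n = (\<Sum>w\<in>coxW F n. (real (tstat S w) - card I) ^ 4) / card (coxW F n)"
    unfolding T_moment4_def S by simp
  let ?X = "(\<Sum>w\<in>coxW F n. (real (tstat S w) - card I) ^ 4) / card (coxW F n)"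
  have "real n ^ 2 / 20736 \<le> (real (card A))^2 / 1296"
    using power_mono[OF cA, of 2] by (simp add: power_divide)
  moreover have "(real (card A))^2 / 1296 \<le> ?X" using moment4_bounds(1) by (simp add: of_nat_power)
  ultimately have "real n ^ 2 / 20736 \<le> ?X" by linarith
  moreover have "?X \<le> 243 * real n ^ 2" using moment4_bounds(2) cI by simp
  ultimately show ?thesis unfolding m4 by simp
qed

section \<open>Permutation combinatorics\<close>

lemma transp_comp_invol: "transp a b \<circ> transp a b = id"
  by (auto simp: transp_def)

definition inversions :: "int set \<Rightarrow> (int \<Rightarrow> int) \<Rightarrow> nat" where
  "inversions P w = card {(p,q) \<in> P \<times> P. p < q \<and> w q < w p}"

lemma card_as_sum: "finite A \<Longrightarrow> int (card {x \<in> A. \<Phi> x}) = (\<Sum>x\<in>A. of_bool (\<Phi> x))"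
  by (simp add: Int_def conj_commute)

lemma inversions_as_sum: "finite P \<Longrightarrow> int (inversions P w) = (\<Sum>x\<in>P \<times> P. of_bool (case x of (p,q) \<Rightarrow> p < q \<and> w q < w p))"
proof -
  assume f: "finite P"
  have "{(p,q) \<in> P \<times> P. p < q \<and> w q < w p} = P \<times> P \<inter> {x. case x of (p,q) \<Rightarrow> p < q \<and> w q < w p}" by auto
  thus ?thesis unfolding inversions_def using f by simp
qed

lemma inversions_comp_invol:
  assumes fin: "finite P" and sP: "\<And>x. x \<in> P \<Longrightarrow> \<sigma> x \<in> P" and inv: "\<And>x. \<sigma> (\<sigma> x) = x"
    and K: "K \<subseteq> P \<times> P"
    and off: "\<And>p q. p \<in> P \<Longrightarrow> q \<in> P \<Longrightarrow> (p,q) \<notin> K \<Longrightarrow> (\<sigma> p < \<sigma> q \<longleftrightarrow> p < q)"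
  shows "int (inversions P (w \<circ> \<sigma>)) = int (inversions P w) +
     (\<Sum>(p,q)\<in>K. of_bool (\<sigma> p < \<sigma> q \<and> w q < w p) - of_bool (p < q \<and> w q < w p))"
proof -
  have fPP: "finite (P \<times> P)" using fin by simp
  have e1: "int (inversions P (w \<circ> \<sigma>)) = (\<Sum>x\<in>P \<times> P. of_bool (case x of (p,q) \<Rightarrow> \<sigma> p < \<sigma> q \<and> w q < w p))"
    unfolding inversions_as_sum[OF fin]
    by (rule sum.reindex_bij_witness[of _ "\<lambda>(p,q). (\<sigma> p, \<sigma> q)" "\<lambda>(p,q). (\<sigma> p, \<sigma> q)"])
       (auto simp: inv sP)
  have e2: "int (inversions P w) = (\<Sum>x\<in>P \<times> P. of_bool (case x of (p,q) \<Rightarrow> p < q \<and> w q < w p))"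
    by (rule inversions_as_sum[OF fin])
  have "(\<Sum>x\<in>P \<times> P. of_bool (case x of (p,q) \<Rightarrow> \<sigma> p < \<sigma> q \<and> w q < w p) - of_bool (case x of (p,q) \<Rightarrow> p < q \<and> w q < w p))
     = (\<Sum>x\<in>K. of_bool (case x of (p,q) \<Rightarrow> \<sigma> p < \<sigma> q \<and> w q < w p) - (of_bool (case x of (p,q) \<Rightarrow> p < q \<and> w q < w p) :: int))"
    by (rule sum.mono_neutral_right[OF fPP K]) (use off in auto)
  thus ?thesis unfolding e1 e2 by (simp add: sum_subtractf case_prod_beta')
qed

lemma card_comp_invol:
  assumes fin: "finite W" and cl: "\<And>w. w \<in> W \<Longrightarrow> w \<circ> a \<in> W" and ia: "\<And>x. a (a x) = x"
  shows "card {w \<in> W. \<Phi> (w \<circ> a)} = card {w \<in> W. \<Phi> w}"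
proof (rule bij_betw_same_card[of "\<lambda>w. w \<circ> a"], rule bij_betw_byWitness[of _ "\<lambda>w. w \<circ> a"])
  have aa: "\<And>w. w \<circ> a \<circ> a = w" using ia by (auto simp: fun_eq_iff)
  show "\<forall>x\<in>{w \<in> W. \<Phi> (w \<circ> a)}. x \<circ> a \<circ> a = x" using aa by blast
  show "\<forall>y\<in>{w \<in> W. \<Phi> w}. y \<circ> a \<circ> a = y" using aa by blast
  show "(\<lambda>w. w \<circ> a) ` {w \<in> W. \<Phi> (w \<circ> a)} \<subseteq> {w \<in> W. \<Phi> w}" using cl by auto
  show "(\<lambda>w. w \<circ> a) ` {w \<in> W. \<Phi> w} \<subseteq> {w \<in> W. \<Phi> (w \<circ> a)}"
  proof
    fix x assume "x \<in> (\<lambda>w. w \<circ> a) ` {w \<in> W. \<Phi> w}"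
    then obtain w where w: "w \<in> W" "\<Phi> w" "x = w \<circ> a" by auto
    have "x \<circ> a = w" using aa[of w] w(3) by simp
    thus "x \<in> {w \<in> W. \<Phi> (w \<circ> a)}" using cl[OF w(1)] w by simp
  qed
qed

lemma three_orders:
  fixes x y z :: int
  assumes "x \<noteq> y" "y \<noteq> z" "x \<noteq> z"
  shows "of_bool (z < y \<and> y < x) + of_bool (y < z \<and> z < x) + of_bool (x < z \<and> z < y)
       + of_bool (x < y \<and> y < z) + of_bool (y < x \<and> x < z) + of_bool (z < x \<and> x < y) = (1::int)"
  using assms by (cases "x < y"; cases "y < z"; cases "x < z") auto

lemma card_split_relative_order:
  fixes W :: "(int \<Rightarrow> int) set" and p q r :: int
  assumes fin: "finite W" and dist: "\<And>w. w \<in> W \<Longrightarrow> w p \<noteq> w q \<and> w q \<noteq> w r \<and> w p \<noteq> w r"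
  shows "int (card W) = int (card {w \<in> W. w r < w q \<and> w q < w p}) + card {w \<in> W. w q < w r \<and> w r < w p}
    + card {w \<in> W. w p < w r \<and> w r < w q} + card {w \<in> W. w p < w q \<and> w q < w r}
    + card {w \<in> W. w q < w p \<and> w p < w r} + card {w \<in> W. w r < w p \<and> w p < w q}"
proof -
  have "int (card W) = (\<Sum>w\<in>W. 1)" by simp
  also have "\<dots> = (\<Sum>w\<in>W. of_bool (w r < w q \<and> w q < w p) + of_bool (w q < w r \<and> w r < w p)
      + of_bool (w p < w r \<and> w r < w q) + of_bool (w p < w q \<and> w q < w r)
      + of_bool (w q < w p \<and> w p < w r) + of_bool (w r < w p \<and> w p < w q))"
    using dist three_orders by (intro sum.cong) auto
  also have "\<dots> = int (card {w \<in> W. w r < w q \<and> w q < w p}) + card {w \<in> W. w q < w r \<and> w r < w p}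
    + card {w \<in> W. w p < w r \<and> w r < w q} + card {w \<in> W. w p < w q \<and> w q < w r}
    + card {w \<in> W. w q < w p \<and> w p < w r} + card {w \<in> W. w r < w p \<and> w p < w q}"
    by (simp only: sum.distrib card_as_sum[OF fin])
  finally show ?thesis .
qed

text \<open>The involutions \<open>a\<close> and \<open>b\<close> generate all six relative orders of the values at
  \<open>j\<close>, \<open>j + 1\<close>, \<open>j + 2\<close>, so these orders are equally frequent.\<close>

lemma double_descent_card:
  fixes W :: "(int \<Rightarrow> int) set" and a b :: "int \<Rightarrow> int" and j :: int
  assumes fin: "finite W"
    and clA: "\<And>w. w \<in> W \<Longrightarrow> w \<circ> a \<in> W" and clB: "\<And>w. w \<in> W \<Longrightarrow> w \<circ> b \<in> W"
    and ia: "\<And>x. a (a x) = x" and ib: "\<And>x. b (b x) = x"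
    and a1: "a j = j+1" "a (j+1) = j" "a (j+2) = j+2"
    and b1: "b j = j" "b (j+1) = j+2" "b (j+2) = j+1"
    and injW: "\<And>w. w \<in> W \<Longrightarrow> inj w"
  shows "6 * card {w \<in> W. w (j+1) < w j \<and> w (j+2) < w (j+1)} = card W"
proof -
  define E where "E = (\<lambda>\<Phi>::int \<Rightarrow> int \<Rightarrow> int \<Rightarrow> bool. card {w \<in> W. \<Phi> (w j) (w (j+1)) (w (j+2))})"
  have swap12: "E (\<lambda>x y z. \<Phi> y x z) = E \<Phi>" for \<Phi>
    using card_comp_invol[OF fin clA ia, of "\<lambda>w. \<Phi> (w j) (w (j+1)) (w (j+2))"]
    unfolding E_def by (simp add: a1)
  have swap23: "E (\<lambda>x y z. \<Phi> x z y) = E \<Phi>" for \<Phi>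
    using card_comp_invol[OF fin clB ib, of "\<lambda>w. \<Phi> (w j) (w (j+1)) (w (j+2))"]
    unfolding E_def by (simp add: b1)
  have dist: "w j \<noteq> w (j+1) \<and> w (j+1) \<noteq> w (j+2) \<and> w j \<noteq> w (j+2)" if "w \<in> W" for w
    using inj_eq[OF injW[OF that]] by simp
  have "int (card W) = int (E (\<lambda>x y z. z < y \<and> y < x)) + E (\<lambda>x y z. y < z \<and> z < x)
     + E (\<lambda>x y z. x < z \<and> z < y) + E (\<lambda>x y z. x < y \<and> y < z)
     + E (\<lambda>x y z. y < x \<and> x < z) + E (\<lambda>x y z. z < x \<and> x < y)"
    unfolding E_def by (rule card_split_relative_order[OF fin dist])
  moreover have "E (\<lambda>x y z. y < z \<and> z < x) = E (\<lambda>x y z. z < y \<and> y < x)"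
    "E (\<lambda>x y z. x < z \<and> z < y) = E (\<lambda>x y z. y < z \<and> z < x)"
    "E (\<lambda>x y z. x < y \<and> y < z) = E (\<lambda>x y z. x < z \<and> z < y)"
    "E (\<lambda>x y z. y < x \<and> x < z) = E (\<lambda>x y z. x < y \<and> y < z)"
    "E (\<lambda>x y z. z < x \<and> x < y) = E (\<lambda>x y z. y < x \<and> x < z)"
    by (rule swap23 swap12)+
  ultimately have "card W = 6 * E (\<lambda>x y z. z < y \<and> y < x)" by linarith
  thus ?thesis unfolding E_def by (simp add: conj_commute)
qed

lemma finite_maps_fixing_outside:
  assumes "finite P"
  shows "finite {w :: int \<Rightarrow> int. (\<forall>x. x \<notin> P \<longrightarrow> w x = x) \<and> (\<forall>x\<in>P. w x \<in> P)}"
proof -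
  let ?S = "{w :: int \<Rightarrow> int. (\<forall>x. x \<notin> P \<longrightarrow> w x = x) \<and> (\<forall>x\<in>P. w x \<in> P)}"
  have "inj_on (\<lambda>w. restrict w P) ?S"
  proof (rule inj_onI)
    fix v w assume "v \<in> ?S" "w \<in> ?S" "restrict v P = restrict w P"
    thus "v = w" by (auto simp: fun_eq_iff restrict_def) metis
  qed
  moreover have "(\<lambda>w. restrict w P) ` ?S \<subseteq> P \<rightarrow>\<^sub>E P" by auto
  moreover have "finite (P \<rightarrow>\<^sub>E P)" using assms by (simp add: finite_PiE)
  ultimately show ?thesis by (meson finite_imageD finite_subset)
qed

lemma bij_betw_transp: "a \<in> P \<Longrightarrow> b \<in> P \<Longrightarrow> bij_betw (transp a b) P P"
  by (rule bij_betw_byWitness[of _ "transp a b"]) (auto simp: transp_def)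

lemma increasing_int_steps:
  fixes f :: "int \<Rightarrow> int"
  assumes inc: "\<And>i. a \<le> i \<Longrightarrow> i < b \<Longrightarrow> f i < f (i + 1)" and "a \<le> p" "p \<le> b"
  shows "f a + (p - a) \<le> f p"
proof -
  have "a + int k \<le> b \<Longrightarrow> f a + int k \<le> f (a + int k)" for k
  proof (induction k)
    case (Suc k)
    have "f a + int k \<le> f (a + int k)" "f (a + int k) < f (a + int k + 1)"
      using Suc inc[of "a + int k"] by simp_all
    moreover have "a + int (Suc k) = a + int k + 1" by simp
    ultimately show ?case by (simp only:)
  qed simp
  from this[of "nat (p - a)"] show ?thesis using assms(2,3) by simp
qed

lemma increasing_fixes:
  fixes f :: "int \<Rightarrow> int"
  assumes inc: "\<And>i. 1 \<le> i \<Longrightarrow> i < N \<Longrightarrow> f i < f (i + 1)"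
    and "1 \<le> f 1" "f N \<le> N" "1 \<le> p" "p \<le> N"
  shows "f p = p"
proof -
  have "f 1 + (p - 1) \<le> f p" by (rule increasing_int_steps[where b = N]) (use inc assms in auto)
  moreover have "f p + (N - p) \<le> f N" by (rule increasing_int_steps[where b = N]) (use inc assms in auto)
  ultimately show ?thesis using assms by linarith
qed

definition sparse_set :: "nat \<Rightarrow> int set" where "sparse_set n = (\<lambda>t. 3 * t) ` {1..(int n - 2) div 3}"

lemma card_sparse_set: "card (sparse_set n) = nat ((int n - 2) div 3)"
  unfolding sparse_set_def by (subst card_image) (auto simp: inj_on_def)

lemma sparse_set_mem: "i \<in> sparse_set n \<Longrightarrow> 3 \<le> i \<and> i \<le> int n - 2 \<and> 3 dvd i"
  unfolding sparse_set_def by auto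

lemma sparse_set_pairwise_far: "i \<in> sparse_set n \<Longrightarrow> j \<in> sparse_set n \<Longrightarrow> i \<noteq> j \<Longrightarrow> far i j"
  unfolding sparse_set_def far_def by auto

lemma sparse_set_far: "i \<in> sparse_set n \<Longrightarrow> j \<notin> {i - 1, i, i + 1} \<Longrightarrow> far i j"
  using sparse_set_mem[of i n] unfolding far_def by auto

lemma card_sparse_set_ge: "n \<ge> 16 \<Longrightarrow> real n / 4 \<le> real (card (sparse_set n))"
  unfolding card_sparse_set by linarith


lemma descent_model_sparse_set:
  assumes lf: "length_function W g I C M k" and fin: "finite W"
    and far_inv: "\<And>w i j. w \<in> W \<Longrightarrow> i \<in> I \<Longrightarrow> j \<in> I \<Longrightarrow> far i j \<Longrightarrow> C j (w \<circ> g i) \<longleftrightarrow> C j w"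
    and mid: "{2..int n - 1} \<subseteq> I"
    and adj_gen: "\<And>j x. 2 \<le> j \<Longrightarrow> j < int n \<Longrightarrow> 1 \<le> x \<Longrightarrow> g j x = transp j (j + 1) x"
    and adj_desc: "\<And>j w. 2 \<le> j \<Longrightarrow> j < int n \<Longrightarrow> w \<in> W \<Longrightarrow> C j w \<longleftrightarrow> w (j + 1) < w j"
  shows "descent_model W g I C M k (sparse_set n)"
proof -
  interpret length_function W g I C M k by (rule lf)
  have double_descent: "6 * card {w \<in> W. C j w \<and> C (j + 1) w} = card W"
    if j: "2 \<le> j" "j + 2 \<le> int n" for j
  proof -
    have jI: "j \<in> I" "j + 1 \<in> I" using mid j by auto
    have invol: "g i (g i x) = x" if "i \<in> I" for i x
      using ginv[OF that] by (metis comp_apply id_apply)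
    have "6 * card {w \<in> W. w (j + 1) < w j \<and> w (j + 2) < w (j + 1)} = card W"
    proof (rule double_descent_card[OF fin])
      show "w \<circ> g j \<in> W" "w \<circ> g (j + 1) \<in> W" if "w \<in> W" for w
        using cl[OF that] jI by blast+
      show "g j (g j x) = x" "g (j + 1) (g (j + 1) x) = x" for x
        using invol jI by blast+
      show "g j j = j + 1" "g j (j + 1) = j" "g j (j + 2) = j + 2"
        "g (j + 1) j = j" "g (j + 1) (j + 1) = j + 2" "g (j + 1) (j + 2) = j + 1"
        using j by (simp_all add: adj_gen transp_def)
      show "inj w" if "w \<in> W" for w
        using that generated_W bij_if_generated bij_is_inj by blast
    qed
    moreover have "{w \<in> W. C j w \<and> C (j + 1) w} = {w \<in> W. w (j + 1) < w j \<and> w (j + 2) < w (j + 1)}"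
      using adj_desc[of j] adj_desc[of "j + 1"] j by (auto simp: add.assoc)
    ultimately show ?thesis by simp
  qed
  show ?thesis
  proof unfold_locales
    show "finite W" by (rule fin)
    show "sparse_set n \<subseteq> I" using sparse_set_mem mid by force
    show "i - 1 \<in> I \<and> i + 1 \<in> I" if "i \<in> sparse_set n" for i
      using sparse_set_mem[OF that] mid by force
    show "6 * card {w \<in> W. C (i - 1) w \<and> C i w} = card W"
      "6 * card {w \<in> W. C i w \<and> C (i + 1) w} = card W" if "i \<in> sparse_set n" for i
      using double_descent[of "i - 1"] double_descent[of i] sparse_set_mem[OF that] by simp_all
  qed (use far_inv sparse_set_far sparse_set_pairwise_far in blast)+
qed
section \<open>Type A\<close>

definition genA :: "int \<Rightarrow> int \<Rightarrow> int" where "genA i = transp i (i + 1)"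
definition descA :: "int \<Rightarrow> (int \<Rightarrow> int) \<Rightarrow> bool" where "descA i w = (w (i + 1) < w i)"
definition lenA :: "nat \<Rightarrow> (int \<Rightarrow> int) \<Rightarrow> nat" where "lenA n w = inversions {1..int n + 1} w"

lemma typeA_iff: "w \<in> coxW TypeA n \<longleftrightarrow> bij_betw w {1..int n + 1} {1..int n + 1} \<and> (\<forall>x. x \<notin> {1..int n + 1} \<longrightarrow> w x = x)"
  by (simp add: coxW_def)

lemma typeA_id: "id \<in> coxW TypeA n"
  by (simp add: typeA_iff)

lemma typeA_closed: "w \<in> coxW TypeA n \<Longrightarrow> i \<in> {1..int n} \<Longrightarrow> w \<circ> genA i \<in> coxW TypeA n"
proof -
  assume w: "w \<in> coxW TypeA n" and i: "i \<in> {1..int n}"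
  have "bij_betw (genA i) {1..int n + 1} {1..int n + 1}" unfolding genA_def using i by (intro bij_betw_transp) auto
  hence "bij_betw (w \<circ> genA i) {1..int n + 1} {1..int n + 1}" using w typeA_iff bij_betw_trans by blast
  moreover have "\<forall>x. x \<notin> {1..int n + 1} \<longrightarrow> (w \<circ> genA i) x = x"
    using w i unfolding typeA_iff genA_def transp_def by auto
  ultimately show ?thesis by (simp add: typeA_iff)
qed

lemma typeA_length_step:
  assumes w: "w \<in> coxW TypeA n" and i: "i \<in> {1..int n}"
  shows "int (lenA n (w \<circ> genA i)) = int (lenA n w) - of_bool (descA i w) + of_bool (w i < w (i+1))"
proof -
  let ?P = "{1..int n + 1}"
  have K: "{(i, i+1), (i+1, i)} \<subseteq> ?P \<times> ?P" using i by auto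
  have "int (inversions ?P (w \<circ> transp i (i+1))) = int (inversions ?P w) +
     (\<Sum>(p,q)\<in>{(i, i+1), (i+1, i)}. of_bool (transp i (i+1) p < transp i (i+1) q \<and> w q < w p) - of_bool (p < q \<and> w q < w p))"
    by (rule inversions_comp_invol[OF _ _ _ K]) (use i in \<open>auto simp: transp_def\<close>)
  thus ?thesis unfolding lenA_def genA_def descA_def by (simp add: transp_def)
qed

lemma typeA_adjacent_distinct: "w \<in> coxW TypeA n \<Longrightarrow> i \<in> {1..int n} \<Longrightarrow> w i \<noteq> w (i+1)"
  unfolding typeA_iff bij_betw_def inj_on_def by force

lemma typeA_descent_exists:
  assumes w: "w \<in> coxW TypeA n" and nid: "w \<noteq> id"
  shows "\<exists>i\<in>{1..int n}. descA i w"
proof (rule ccontr)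
  assume "\<not> ?thesis"
  hence inc: "\<And>i. 1 \<le> i \<Longrightarrow> i < int n + 1 \<Longrightarrow> w i < w (i+1)"
    using typeA_adjacent_distinct[OF w] unfolding descA_def by force
  have rng: "\<And>p. 1 \<le> p \<Longrightarrow> p \<le> int n + 1 \<Longrightarrow> 1 \<le> w p \<and> w p \<le> int n + 1"
    using w unfolding typeA_iff bij_betw_def by auto
  have "w x = x" for x
  proof (cases "x \<in> {1..int n + 1}")
    case True thus ?thesis using increasing_fixes[of "int n + 1" w x, OF inc] rng[of 1] rng[of "int n + 1"] by auto
  next
    case False thus ?thesis using w typeA_iff by blast
  qed
  hence "w = id" by auto
  thus False using nid by simp
qed


lemma typeA_length_id: "lenA n id = 0"
proof -
  have "{(p,q) \<in> {1..int n + 1} \<times> {1..int n + 1}. p < q \<and> id q < id p} = {}" by auto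
  thus ?thesis unfolding lenA_def inversions_def by (simp only: card.empty)
qed

lemma typeA_inj_gen: "inj_on genA I"
proof (rule inj_onI)
  fix i j assume "genA i = genA j"
  hence "genA i i = genA j i" by simp
  thus "i = j" unfolding genA_def transp_def by (auto split: if_splits)
qed

lemma typeA_length_function: "length_function (coxW TypeA n) genA {1..int n} descA (lenA n) 1"
proof
  show "id \<in> coxW TypeA n" by (rule typeA_id)
  show "\<And>w i. w \<in> coxW TypeA n \<Longrightarrow> i \<in> {1..int n} \<Longrightarrow> w \<circ> genA i \<in> coxW TypeA n" by (rule typeA_closed)
  show "lenA n id = 0" by (rule typeA_length_id)
  show "\<And>w i. w \<in> coxW TypeA n \<Longrightarrow> i \<in> {1..int n} \<Longrightarrow> descA i w \<Longrightarrow> lenA n (w \<circ> genA i) + 1 = lenA n w"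
  proof -
    fix w i assume w: "w \<in> coxW TypeA n" and i: "i \<in> {1..int n}" and c: "descA i w"
    have "\<not> w i < w (i+1)" using c unfolding descA_def by simp
    thus "lenA n (w \<circ> genA i) + 1 = lenA n w" using typeA_length_step[OF w i] c by simp
  qed
  show "\<And>w i. w \<in> coxW TypeA n \<Longrightarrow> i \<in> {1..int n} \<Longrightarrow> \<not> descA i w \<Longrightarrow> lenA n (w \<circ> genA i) = lenA n w + 1"
  proof -
    fix w i assume w: "w \<in> coxW TypeA n" and i: "i \<in> {1..int n}" and c: "\<not> descA i w"
    have "w i < w (i+1)" using c typeA_adjacent_distinct[OF w i] unfolding descA_def by simp
    thus "lenA n (w \<circ> genA i) = lenA n w + 1" using typeA_length_step[OF w i] c by simp
  qed
  show "\<And>w. w \<in> coxW TypeA n \<Longrightarrow> w \<noteq> id \<Longrightarrow> \<exists>i\<in>{1..int n}. descA i w" by (rule typeA_descent_exists)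
  show "\<And>i. i \<in> {1..int n} \<Longrightarrow> genA i \<circ> genA i = id" unfolding genA_def by (rule transp_comp_invol)
  show "inj_on genA {1..int n}" by (rule typeA_inj_gen)
qed auto

lemma finite_typeA: "finite (coxW TypeA n)"
proof (rule finite_subset[OF _ finite_maps_fixing_outside[of "{1..int n + 1}"]])
  show "coxW TypeA n \<subseteq> {w. (\<forall>x. x \<notin> {1..int n + 1} \<longrightarrow> w x = x) \<and> (\<forall>x\<in>{1..int n + 1}. w x \<in> {1..int n + 1})}"
  proof
    fix w assume "w \<in> coxW TypeA n"
    thus "w \<in> {w. (\<forall>x. x \<notin> {1..int n + 1} \<longrightarrow> w x = x) \<and> (\<forall>x\<in>{1..int n + 1}. w x \<in> {1..int n + 1})}"
      unfolding typeA_iff bij_betw_def by auto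
  qed
qed simp


lemma typeA_far_commute: "far i j \<Longrightarrow> descA j (w \<circ> genA i) \<longleftrightarrow> descA j w"
  unfolding descA_def genA_def far_def transp_def by auto

lemma T_moment4_typeA:
  assumes "16 \<le> n"
  shows "real n ^ 2 / 20736 \<le> T_moment4 TypeA n \<and> T_moment4 TypeA n \<le> 243 * real n ^ 2"
proof (rule T_moment4_bounds)
  show "descent_model (coxW TypeA n) genA {1..int n} descA (lenA n) 1 (sparse_set n)"
  proof (rule descent_model_sparse_set[OF typeA_length_function finite_typeA])
    show "descA j (w \<circ> genA i) \<longleftrightarrow> descA j w" if "far i j" for w i j
      using that by (rule typeA_far_commute)
  qed (auto simp: genA_def descA_def)
  show "coxS TypeA n = genA ` {1..int n}" unfolding coxS_def genA_def by auto
  show "card {1..int n} = n" by simp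
  show "real n / 4 \<le> real (card (sparse_set n))" using assms by (rule card_sparse_set_ge)
qed
section \<open>Signed permutations\<close>

definition nonzero_range :: "nat \<Rightarrow> int set" where "nonzero_range n = {- int n..int n} - {0}"
definition neg_count :: "nat \<Rightarrow> (int \<Rightarrow> int) \<Rightarrow> nat" where "neg_count n w = card {i \<in> {1..int n}. w i < 0}"
definition gen_adj :: "int \<Rightarrow> int \<Rightarrow> int" where "gen_adj i = transp i (i + 1) \<circ> transp (- i) (- (i + 1))"
definition genB0 :: "int \<Rightarrow> int" where "genB0 = transp 1 (-1)"
definition genD0 :: "int \<Rightarrow> int" where "genD0 = transp 1 (-2) \<circ> transp (-1) 2"

lemma finite_nonzero_range: "finite (nonzero_range n)" by (simp add: nonzero_range_def)

lemma signed_perm_odd: "w \<in> signed_perms n \<Longrightarrow> w (- x) = - w x"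
  by (simp add: signed_perms_def)
lemma signed_perm_bij: "w \<in> signed_perms n \<Longrightarrow> bij w"
  by (simp add: signed_perms_def)
lemma signed_perm_out: "w \<in> signed_perms n \<Longrightarrow> x \<notin> {- int n..int n} \<Longrightarrow> w x = x"
  by (simp add: signed_perms_def)
lemma signed_perm_zero: "w \<in> signed_perms n \<Longrightarrow> w 0 = 0"
  using signed_perm_odd[of w n 0] by simp
lemma signed_perm_inj: "w \<in> signed_perms n \<Longrightarrow> w x = w y \<longleftrightarrow> x = y"
  using signed_perm_bij bij_is_inj inj_eq by metis
lemma signed_perm_range: "w \<in> signed_perms n \<Longrightarrow> x \<in> {- int n..int n} \<Longrightarrow> w x \<in> {- int n..int n}"
proof (rule ccontr)
  assume w: "w \<in> signed_perms n" and x: "x \<in> {- int n..int n}" and nx: "w x \<notin> {- int n..int n}"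
  have "w (w x) = w x" using signed_perm_out[OF w nx] .
  hence "w x = x" using signed_perm_inj[OF w] by simp
  thus False using x nx by simp
qed
lemma signed_perm_nonzero_range: "w \<in> signed_perms n \<Longrightarrow> x \<in> nonzero_range n \<Longrightarrow> w x \<in> nonzero_range n"
  using signed_perm_range[of w n x] signed_perm_inj[of w n x 0] signed_perm_zero[of w n] unfolding nonzero_range_def by auto
lemma signed_perm_pos: "w \<in> signed_perms n \<Longrightarrow> 1 \<le> x \<Longrightarrow> x \<le> int n \<Longrightarrow> w x \<noteq> 0 \<and> - int n \<le> w x \<and> w x \<le> int n"
  using signed_perm_nonzero_range[of w n x] unfolding nonzero_range_def by auto
lemma signed_perm_id: "id \<in> signed_perms n"
  by (simp add: signed_perms_def)

lemma signed_perm_comp: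
  assumes w: "w \<in> signed_perms n" and inv: "\<And>x. \<sigma> (\<sigma> x) = x" and odd: "\<And>x. \<sigma> (- x) = - \<sigma> x"
    and out: "\<And>x. x \<notin> {- int n..int n} \<Longrightarrow> \<sigma> x = x"
  shows "w \<circ> \<sigma> \<in> signed_perms n"
proof -
  have "bij (w \<circ> \<sigma>)" using signed_perm_bij[OF w] involuntory_imp_bij[of \<sigma>] inv by (blast intro: bij_comp)
  moreover have "\<forall>x. (w \<circ> \<sigma>) (- x) = - (w \<circ> \<sigma>) x" using odd signed_perm_odd[OF w] by simp
  moreover have "\<forall>x. x \<notin> {- int n..int n} \<longrightarrow> (w \<circ> \<sigma>) x = x" using out signed_perm_out[OF w] by simp
  ultimately show ?thesis unfolding signed_perms_def by blast
qed

lemma gen_adj_inv: "1 \<le> i \<Longrightarrow> gen_adj i (gen_adj i x) = x" unfolding gen_adj_def transp_def by auto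
lemma gen_adj_odd: "1 \<le> i \<Longrightarrow> gen_adj i (- x) = - gen_adj i x" unfolding gen_adj_def transp_def by auto
lemma gen_adj_out: "1 \<le> i \<Longrightarrow> i + 1 \<le> int n \<Longrightarrow> x \<notin> {- int n..int n} \<Longrightarrow> gen_adj i x = x"
  unfolding gen_adj_def transp_def by auto
lemma gen_adj_pos: "1 \<le> i \<Longrightarrow> 1 \<le> p \<Longrightarrow> gen_adj i p = transp i (i + 1) p"
  unfolding gen_adj_def transp_def by auto
lemma gen_adj_comp_invol: "1 \<le> i \<Longrightarrow> gen_adj i \<circ> gen_adj i = id" using gen_adj_inv by auto

lemma genB0_inv: "genB0 (genB0 x) = x" unfolding genB0_def transp_def by auto
lemma genB0_odd: "genB0 (- x) = - genB0 x" unfolding genB0_def transp_def by auto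
lemma genB0_out: "1 \<le> n \<Longrightarrow> x \<notin> {- int n..int n} \<Longrightarrow> genB0 x = x" unfolding genB0_def transp_def by auto
lemma genB0_pos: "2 \<le> p \<Longrightarrow> genB0 p = p" unfolding genB0_def transp_def by auto

lemma genD0_inv: "genD0 (genD0 x) = x" unfolding genD0_def transp_def by auto
lemma genD0_odd: "genD0 (- x) = - genD0 x" unfolding genD0_def transp_def by auto
lemma genD0_out: "2 \<le> n \<Longrightarrow> x \<notin> {- int n..int n} \<Longrightarrow> genD0 x = x" unfolding genD0_def transp_def by auto
lemma genD0_pos: "3 \<le> p \<Longrightarrow> genD0 p = p" unfolding genD0_def transp_def by auto

lemma nonzero_range_iff: "x \<in> nonzero_range n \<longleftrightarrow> x \<noteq> 0 \<and> - int n \<le> x \<and> x \<le> int n" unfolding nonzero_range_def by auto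

lemma neg_count_as_sum: "int (neg_count n w) = (\<Sum>p\<in>{1..int n}. of_bool (w p < 0))"
  unfolding neg_count_def by (rule card_as_sum) simp

lemma gen_adj_inversions:
  assumes w: "w \<in> signed_perms n" and i: "1 \<le> i" "i + 1 \<le> int n"
  shows "int (inversions (nonzero_range n) (w \<circ> gen_adj i)) = int (inversions (nonzero_range n) w) + 2 * (of_bool (w i < w (i+1)) - of_bool (w (i+1) < w i))"
proof -
  have K: "{(i, i+1), (i+1, i), (-(i+1), -i), (-i, -(i+1))} \<subseteq> nonzero_range n \<times> nonzero_range n" using i by (auto simp: nonzero_range_iff)
  have "int (inversions (nonzero_range n) (w \<circ> gen_adj i)) = int (inversions (nonzero_range n) w) +
     (\<Sum>(p,q)\<in>{(i, i+1), (i+1, i), (-(i+1), -i), (-i, -(i+1))}. of_bool (gen_adj i p < gen_adj i q \<and> w q < w p) - of_bool (p < q \<and> w q < w p))"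
  proof (rule inversions_comp_invol[OF finite_nonzero_range _ _ K])
    show "\<And>x. x \<in> nonzero_range n \<Longrightarrow> gen_adj i x \<in> nonzero_range n" using i unfolding nonzero_range_iff gen_adj_def transp_def by auto
    show "\<And>x. gen_adj i (gen_adj i x) = x" using gen_adj_inv i by blast
    show "\<And>p q. p \<in> nonzero_range n \<Longrightarrow> q \<in> nonzero_range n \<Longrightarrow> (p, q) \<notin> {(i, i+1), (i+1, i), (-(i+1), -i), (-i, -(i+1))} \<Longrightarrow>
          (gen_adj i p < gen_adj i q) = (p < q)"
      using i unfolding gen_adj_def transp_def by auto
  qed
  also have "\<dots> = int (inversions (nonzero_range n) w) + 2 * (of_bool (w i < w (i+1)) - of_bool (w (i+1) < w i))"
  proof -
    have o: "w (- i - 1) = - w (i+1)" "w (- i) = - w i" using signed_perm_odd[OF w, of "i+1"] signed_perm_odd[OF w, of i] by simp_all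
    have d: "w i \<noteq> w (i+1)" using signed_perm_inj[OF w, of i "i+1"] by simp
    show ?thesis using i d by (simp add: gen_adj_def transp_def o)
  qed
  finally show ?thesis by linarith
qed

lemma gen_adj_neg_count:
  assumes w: "w \<in> signed_perms n" and i: "1 \<le> i" "i + 1 \<le> int n"
  shows "neg_count n (w \<circ> gen_adj i) = neg_count n w"
  unfolding neg_count_def
proof (rule bij_betw_same_card[of "gen_adj i"], rule bij_betw_byWitness[of _ "gen_adj i"])
  show "\<forall>a\<in>{p \<in> {1..int n}. (w \<circ> gen_adj i) p < 0}. gen_adj i (gen_adj i a) = a" using gen_adj_inv i by blast
  show "\<forall>a\<in>{p \<in> {1..int n}. w p < 0}. gen_adj i (gen_adj i a) = a" using gen_adj_inv i by blast
  show "gen_adj i ` {p \<in> {1..int n}. (w \<circ> gen_adj i) p < 0} \<subseteq> {p \<in> {1..int n}. w p < 0}"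
    using i unfolding gen_adj_def transp_def by auto
  show "gen_adj i ` {p \<in> {1..int n}. w p < 0} \<subseteq> {p \<in> {1..int n}. (w \<circ> gen_adj i) p < 0}"
  proof
    fix x assume "x \<in> gen_adj i ` {p \<in> {1..int n}. w p < 0}"
    then obtain p where p: "p \<in> {1..int n}" "w p < 0" "x = gen_adj i p" by auto
    have "gen_adj i x = p" using p gen_adj_inv i by simp
    moreover have "x \<in> {1..int n}" using p i unfolding gen_adj_def transp_def by auto
    ultimately show "x \<in> {p \<in> {1..int n}. (w \<circ> gen_adj i) p < 0}" using p by simp
  qed
qed

lemma genB0_inversions:
  assumes w: "w \<in> signed_perms n" and n: "1 \<le> n"
  shows "int (inversions (nonzero_range n) (w \<circ> genB0)) = int (inversions (nonzero_range n) w) + (of_bool (0 < w 1) - of_bool (w 1 < 0))"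
proof -
  have K: "{(1, -1), (-1, 1)} \<subseteq> nonzero_range n \<times> nonzero_range n" using n by (auto simp: nonzero_range_iff)
  have "int (inversions (nonzero_range n) (w \<circ> genB0)) = int (inversions (nonzero_range n) w) +
     (\<Sum>(p,q)\<in>{(1, -1), (-1, 1)}. of_bool (genB0 p < genB0 q \<and> w q < w p) - of_bool (p < q \<and> w q < w p))"
  proof (rule inversions_comp_invol[OF finite_nonzero_range _ _ K])
    show "\<And>x. x \<in> nonzero_range n \<Longrightarrow> genB0 x \<in> nonzero_range n" using n unfolding nonzero_range_iff genB0_def transp_def by auto
    show "\<And>x. genB0 (genB0 x) = x" by (rule genB0_inv)
    show "\<And>p q. p \<in> nonzero_range n \<Longrightarrow> q \<in> nonzero_range n \<Longrightarrow> (p, q) \<notin> {(1, -1), (-1, 1)} \<Longrightarrow> (genB0 p < genB0 q) = (p < q)"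
      unfolding genB0_def transp_def nonzero_range_iff by auto
  qed
  also have "\<dots> = int (inversions (nonzero_range n) w) + (of_bool (0 < w 1) - of_bool (w 1 < 0))"
    using signed_perm_odd[OF w, of 1] by (simp add: genB0_def transp_def)
  finally show ?thesis .
qed

lemma genB0_neg_count:
  assumes w: "w \<in> signed_perms n" and n: "1 \<le> n"
  shows "int (neg_count n (w \<circ> genB0)) = int (neg_count n w) + (of_bool (0 < w 1) - of_bool (w 1 < 0))"
proof -
  have e: "{1..int n} = insert 1 {2..int n}" using n by auto
  have "(\<Sum>p\<in>{2..int n}. of_bool ((w \<circ> genB0) p < 0)) = (\<Sum>p\<in>{2..int n}. (of_bool (w p < 0) :: int))"
    by (intro sum.cong) (auto simp: genB0_pos)
  moreover have "(w \<circ> genB0) 1 = - w 1" using signed_perm_odd[OF w, of 1] by (simp add: genB0_def transp_def)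
  ultimately show ?thesis unfolding neg_count_as_sum e by simp
qed

lemma genD0_vals: "genD0 (-2) = 1" "genD0 (-1) = 2" "genD0 1 = -2" "genD0 2 = -1"
  "x \<notin> {-2, -1, 1, 2} \<Longrightarrow> genD0 x = x"
  unfolding genD0_def transp_def by auto

lemma genD0_off:
  assumes p: "p \<noteq> 0" and q: "q \<noteq> 0"
    and K: "(p, q) \<notin> {(-2, 1), (1, -2), (-2, 2), (2, -2), (-1, 1), (1, -1), (-1, 2), (2, -1)}"
  shows "(genD0 p < genD0 q) = (p < q)"
proof (cases "p \<in> {-2, -1, 1, 2}")
  case pin: True
  show ?thesis
  proof (cases "q \<in> {-2, -1, 1, 2}")
    case True thus ?thesis using pin K by (auto simp: genD0_vals)
  next
    case False
    hence "q \<le> -3 \<or> 3 \<le> q" using q by auto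
    thus ?thesis using pin False by (auto simp: genD0_vals)
  qed
next
  case pout: False
  hence pp: "p \<le> -3 \<or> 3 \<le> p" using p by auto
  show ?thesis
  proof (cases "q \<in> {-2, -1, 1, 2}")
    case True thus ?thesis using pout pp by (auto simp: genD0_vals)
  next
    case False thus ?thesis using pout by (simp add: genD0_vals)
  qed
qed

lemma genD0_inversions:
  assumes w: "w \<in> signed_perms n" and n: "2 \<le> n"
  shows "int (inversions (nonzero_range n) (w \<circ> genD0)) = int (inversions (nonzero_range n) w) + 2 * (of_bool (0 < w 1 + w 2) - of_bool (w 1 + w 2 < 0))
     + (of_bool (0 < w 1) - of_bool (w 1 < 0)) + (of_bool (0 < w 2) - of_bool (w 2 < 0))"
proof -
  let ?K = "{(-2, 1), (1, -2), (-2, 2), (2, -2), (-1, 1), (1, -1), (-1, 2), (2, -1)}"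
  have K: "?K \<subseteq> nonzero_range n \<times> nonzero_range n" using n by (auto simp: nonzero_range_iff)
  have "int (inversions (nonzero_range n) (w \<circ> genD0)) = int (inversions (nonzero_range n) w) +
     (\<Sum>(p,q)\<in>?K. of_bool (genD0 p < genD0 q \<and> w q < w p) - of_bool (p < q \<and> w q < w p))"
  proof (rule inversions_comp_invol[OF finite_nonzero_range _ _ K])
    show "\<And>x. x \<in> nonzero_range n \<Longrightarrow> genD0 x \<in> nonzero_range n" using n unfolding nonzero_range_iff genD0_def transp_def by auto
    show "\<And>x. genD0 (genD0 x) = x" by (rule genD0_inv)
    show "\<And>p q. p \<in> nonzero_range n \<Longrightarrow> q \<in> nonzero_range n \<Longrightarrow> (p, q) \<notin> ?K \<Longrightarrow> (genD0 p < genD0 q) = (p < q)"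
      using genD0_off unfolding nonzero_range_iff by blast
  qed
  also have "(\<Sum>(p,q)\<in>?K. of_bool (genD0 p < genD0 q \<and> w q < w p) - of_bool (p < q \<and> w q < w p))
     = 2 * (of_bool (0 < w 1 + w 2) - of_bool (w 1 + w 2 < 0))
     + (of_bool (0 < w 1) - of_bool (w 1 < 0)) + (of_bool (0 < w 2) - (of_bool (w 2 < 0) :: int))"
  proof -
    have o: "w (-1) = - w 1" "w (-2) = - w 2" using signed_perm_odd[OF w, of 1] signed_perm_odd[OF w, of 2] by simp_all
    show ?thesis by (simp add: genD0_vals o)
  qed
  finally show ?thesis by linarith
qed

lemma genD0_neg_count:
  assumes w: "w \<in> signed_perms n" and n: "2 \<le> n"
  shows "int (neg_count n (w \<circ> genD0)) = int (neg_count n w) + (of_bool (0 < w 1) - of_bool (w 1 < 0)) + (of_bool (0 < w 2) - of_bool (w 2 < 0))"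
proof -
  have e: "{1..int n} = insert 1 (insert 2 {3..int n})" using n by auto
  have "(\<Sum>p\<in>{3..int n}. of_bool ((w \<circ> genD0) p < 0)) = (\<Sum>p\<in>{3..int n}. (of_bool (w p < 0) :: int))"
    by (intro sum.cong) (auto simp: genD0_pos)
  moreover have "(w \<circ> genD0) 1 = - w 2" "(w \<circ> genD0) 2 = - w 1"
    using signed_perm_odd[OF w, of 1] signed_perm_odd[OF w, of 2] by (simp_all add: genD0_def transp_def)
  ultimately show ?thesis unfolding neg_count_as_sum e by simp
qed

lemma signed_perm_increasing_eq_id:
  assumes w: "w \<in> signed_perms n" and inc: "\<And>i. 1 \<le> i \<Longrightarrow> i < int n \<Longrightarrow> w i < w (i + 1)"
    and w1: "1 \<le> w 1"
  shows "w = id"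
proof
  have pos: "w p = p" if "1 \<le> p" "p \<le> int n" for p
  proof (rule increasing_fixes[OF inc w1 _ that])
    show "w (int n) \<le> int n" using signed_perm_pos[OF w, of "int n"] that by simp
  qed
  fix x
  show "w x = id x"
  proof (cases "x \<in> {- int n..int n}")
    case True
    consider "x = 0" | "1 \<le> x" | "x \<le> -1" by linarith
    thus ?thesis
    proof cases
      case 1 thus ?thesis using signed_perm_zero[OF w] by simp
    next
      case 2 thus ?thesis using pos True by simp
    next
      case 3 thus ?thesis using pos[of "-x"] True signed_perm_odd[OF w, of "-x"] by simp
    qed
  next
    case False thus ?thesis using signed_perm_out[OF w] by simp
  qed
qed

lemma signed_perm_increasing_neg_count:
  assumes w: "w \<in> signed_perms n" and inc: "\<And>i. 1 \<le> i \<Longrightarrow> i < int n \<Longrightarrow> w i < w (i + 1)"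
    and "1 \<le> n" "w 1 < 0" "0 < w 2"
  shows "neg_count n w = 1"
proof -
  have "{i \<in> {1..int n}. w i < 0} = {1}"
  proof safe
    fix p assume p: "p \<in> {1..int n}" "w p < 0"
    show "p = 1"
    proof (rule ccontr)
      assume "p \<noteq> 1"
      hence "w 2 + (p - 2) \<le> w p" using increasing_int_steps[of 2 "int n" w p] inc p by force
      moreover have "2 \<le> p" using p \<open>p \<noteq> 1\<close> by auto
      ultimately show False using p(2) assms(5) by linarith
    qed
  qed (use assms in auto)
  thus ?thesis unfolding neg_count_def by simp
qed

section \<open>Type B\<close>

text \<open>Inversions among \<open>\<plusminus>1, \<dots>, \<plusminus>n\<close> count every type B inversion twice except those coming
  from negative entries, hence \<open>lenB\<close> is twice the Coxeter length; likewise for \<open>lenD\<close>.\<close>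

definition genB :: "int \<Rightarrow> int \<Rightarrow> int" where "genB i = (if i = 0 then genB0 else gen_adj i)"
definition descB :: "int \<Rightarrow> (int \<Rightarrow> int) \<Rightarrow> bool" where "descB i w = (if i = 0 then w 1 < 0 else w (i+1) < w i)"
definition lenB :: "nat \<Rightarrow> (int \<Rightarrow> int) \<Rightarrow> nat" where "lenB n w = inversions (nonzero_range n) w + neg_count n w"

lemma typeB_eq: "coxW TypeB n = signed_perms n" by (simp add: coxW_def)

lemma inversions_id: "inversions P id = 0"
proof -
  have "{(p,q) \<in> P \<times> P. p < q \<and> id q < id p} = {}" by auto
  thus ?thesis unfolding inversions_def by (simp only: card.empty)
qed

lemma neg_count_id: "neg_count n id = 0"
proof -
  have "{i \<in> {1..int n}. id i < 0} = {}" by auto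
  thus ?thesis unfolding neg_count_def by (simp only: card.empty)
qed

lemma typeB_closed:
  assumes n: "1 \<le> n" and w: "w \<in> signed_perms n" and i: "i \<in> {0..int n - 1}"
  shows "w \<circ> genB i \<in> signed_perms n"
proof (cases "i = 0")
  case True thus ?thesis unfolding genB_def using genB0_inv genB0_odd genB0_out[OF n] by (auto intro!: signed_perm_comp[OF w])
next
  case False
  hence i': "1 \<le> i" "i + 1 \<le> int n" using i by auto
  thus ?thesis unfolding genB_def using False gen_adj_inv[OF i'(1)] gen_adj_odd[OF i'(1)] gen_adj_out[OF i'] by (auto intro!: signed_perm_comp[OF w])
qed

lemma typeB_length_step:
  assumes n: "1 \<le> n" and w: "w \<in> signed_perms n" and i: "i \<in> {0..int n - 1}"
  shows "int (lenB n (w \<circ> genB i)) = int (lenB n w) + (if descB i w then -2 else 2)"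
proof (cases "i = 0")
  case True
  have "w 1 \<noteq> 0" using signed_perm_pos[OF w, of 1] n by simp
  thus ?thesis using True genB0_inversions[OF w n] genB0_neg_count[OF w n] unfolding lenB_def genB_def descB_def by auto
next
  case False
  hence i': "1 \<le> i" "i + 1 \<le> int n" using i by auto
  have "w i \<noteq> w (i+1)" using signed_perm_inj[OF w, of i "i+1"] by simp
  thus ?thesis using False gen_adj_inversions[OF w i'] gen_adj_neg_count[OF w i'] unfolding lenB_def genB_def descB_def by auto
qed

lemma typeB_descent_exists:
  assumes n: "1 \<le> n" and w: "w \<in> signed_perms n" and nid: "w \<noteq> id"
  shows "\<exists>i\<in>{0..int n - 1}. descB i w"
proof (rule ccontr)
  assume "\<not> ?thesis"
  hence nc: "\<And>i. i \<in> {0..int n - 1} \<Longrightarrow> \<not> descB i w" by blast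
  have w1: "1 \<le> w 1" using nc[of 0] n signed_perm_pos[OF w, of 1] unfolding descB_def by auto
  have inc: "\<And>i. 1 \<le> i \<Longrightarrow> i < int n \<Longrightarrow> w i < w (i+1)"
  proof -
    fix i :: int assume "1 \<le> i" "i < int n"
    hence "\<not> w (i+1) < w i" using nc[of i] unfolding descB_def by auto
    moreover have "w i \<noteq> w (i+1)" using signed_perm_inj[OF w, of i "i+1"] by simp
    ultimately show "w i < w (i+1)" by simp
  qed
  have "w = id" by (rule signed_perm_increasing_eq_id[OF w inc w1])
  thus False using nid by simp
qed

lemma typeB_inj_gen: "inj_on genB {0..int n - 1}"
proof (rule inj_onI)
  fix i j assume i: "i \<in> {0..int n - 1}" and j: "j \<in> {0..int n - 1}" and e: "genB i = genB j"
  have e1: "genB i 1 = genB j 1" and e2: "genB i i = genB j i" using e by simp_all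
  show "i = j"
  proof (cases "i = 0 \<or> j = 0")
    case True thus ?thesis using e1 i j unfolding genB_def genB0_def gen_adj_def transp_def by (auto split: if_splits)
  next
    case False thus ?thesis using e2 i j unfolding genB_def genB0_def gen_adj_def transp_def by (auto split: if_splits)
  qed
qed

lemma typeB_length_function: "1 \<le> n \<Longrightarrow> length_function (coxW TypeB n) genB {0..int n - 1} descB (lenB n) 2"
proof
  assume n: "1 \<le> n"
  show "id \<in> coxW TypeB n" by (simp add: typeB_eq signed_perm_id)
  show "\<And>w i. w \<in> coxW TypeB n \<Longrightarrow> i \<in> {0..int n - 1} \<Longrightarrow> w \<circ> genB i \<in> coxW TypeB n"
    using typeB_closed[OF n] by (simp add: typeB_eq)
  show "lenB n id = 0" by (simp add: lenB_def inversions_id neg_count_id)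
  show "\<And>w i. w \<in> coxW TypeB n \<Longrightarrow> i \<in> {0..int n - 1} \<Longrightarrow> descB i w \<Longrightarrow> lenB n (w \<circ> genB i) + 2 = lenB n w"
    using typeB_length_step[OF n] unfolding typeB_eq by fastforce
  show "\<And>w i. w \<in> coxW TypeB n \<Longrightarrow> i \<in> {0..int n - 1} \<Longrightarrow> \<not> descB i w \<Longrightarrow> lenB n (w \<circ> genB i) = lenB n w + 2"
    using typeB_length_step[OF n] unfolding typeB_eq by fastforce
  show "\<And>w. w \<in> coxW TypeB n \<Longrightarrow> w \<noteq> id \<Longrightarrow> \<exists>i\<in>{0..int n - 1}. descB i w"
    using typeB_descent_exists[OF n] unfolding typeB_eq by blast
  show "\<And>i. i \<in> {0..int n - 1} \<Longrightarrow> genB i \<circ> genB i = id"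
  proof -
    fix i :: int assume i: "i \<in> {0..int n - 1}"
    show "genB i \<circ> genB i = id"
    proof (cases "i = 0")
      case True thus ?thesis unfolding genB_def using genB0_inv by (auto simp: fun_eq_iff)
    next
      case False hence "1 \<le> i" using i by auto
      thus ?thesis unfolding genB_def using False gen_adj_comp_invol by simp
    qed
  qed
  show "inj_on genB {0..int n - 1}" by (rule typeB_inj_gen)
qed auto

lemma finite_signed_perms: "finite (signed_perms n)"
proof (rule finite_subset[OF _ finite_maps_fixing_outside[of "{- int n..int n}"]])
  show "signed_perms n \<subseteq> {w. (\<forall>x. x \<notin> {- int n..int n} \<longrightarrow> w x = x) \<and> (\<forall>x\<in>{- int n..int n}. w x \<in> {- int n..int n})}"
    using signed_perm_out signed_perm_range by blast
qed simp

lemma typeB_far_fixes: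
  assumes i: "i \<in> {0..int n - 1}" and j: "j \<in> {0..int n - 1}" and f: "far i j"
  shows "(j = 0 \<longrightarrow> genB i 1 = 1) \<and> (j \<noteq> 0 \<longrightarrow> genB i j = j \<and> genB i (j+1) = j+1)"
proof (cases "i = 0")
  case True
  hence "3 \<le> j" using f j unfolding far_def by auto
  thus ?thesis using True unfolding genB_def by (simp add: genB0_pos)
next
  case False
  hence i1: "1 \<le> i" using i by auto
  show ?thesis
  proof (cases "j = 0")
    case True
    hence "3 \<le> i" using f i unfolding far_def by auto
    thus ?thesis using False True unfolding genB_def by (simp add: gen_adj_pos transp_def)
  next
    case jn: False
    hence "2 \<le> \<bar>i - j\<bar>" "1 \<le> j" using f j unfolding far_def by auto
    thus ?thesis using False jn i1 unfolding genB_def by (simp add: gen_adj_pos transp_def) arith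
  qed
qed


lemma typeB_far_commute:
  assumes "i \<in> {0..int n - 1}" "j \<in> {0..int n - 1}" "far i j"
  shows "descB j (w \<circ> genB i) \<longleftrightarrow> descB j w"
  using typeB_far_fixes[OF assms] by (cases "j = 0") (simp_all add: descB_def)

lemma coxS_TypeB: "1 \<le> n \<Longrightarrow> coxS TypeB n = genB ` {0..int n - 1}"
  unfolding coxS_def genB_def genB0_def gen_adj_def
  by (auto intro: image_eqI[of _ _ 0] image_eqI[where x = i for i])

lemma T_moment4_typeB:
  assumes "16 \<le> n"
  shows "real n ^ 2 / 20736 \<le> T_moment4 TypeB n \<and> T_moment4 TypeB n \<le> 243 * real n ^ 2"
proof (rule T_moment4_bounds)
  show "descent_model (coxW TypeB n) genB {0..int n - 1} descB (lenB n) 2 (sparse_set n)"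
  proof (rule descent_model_sparse_set[OF typeB_length_function])
    show "descB j (w \<circ> genB i) \<longleftrightarrow> descB j w"
      if "i \<in> {0..int n - 1}" "j \<in> {0..int n - 1}" "far i j" for w i j
      using that by (rule typeB_far_commute)
  qed (use assms in \<open>auto simp: typeB_eq finite_signed_perms genB_def descB_def gen_adj_pos\<close>)
  show "coxS TypeB n = genB ` {0..int n - 1}" using assms by (intro coxS_TypeB) simp
  show "card {0..int n - 1} = n" by simp
  show "real n / 4 \<le> real (card (sparse_set n))" using assms by (rule card_sparse_set_ge)
qed
section \<open>Type D\<close>

definition genD :: "int \<Rightarrow> int \<Rightarrow> int" where "genD i = (if i = 0 then genD0 else gen_adj i)"
definition descD :: "int \<Rightarrow> (int \<Rightarrow> int) \<Rightarrow> bool" where "descD i w = (if i = 0 then w 1 + w 2 < 0 else w (i+1) < w i)"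
definition lenD :: "nat \<Rightarrow> (int \<Rightarrow> int) \<Rightarrow> nat" where "lenD n w = inversions (nonzero_range n) w - neg_count n w"

lemma typeD_iff: "w \<in> coxW TypeD n \<longleftrightarrow> w \<in> signed_perms n \<and> even (neg_count n w)"
  by (simp add: coxW_def neg_count_def)

lemma neg_count_le_inversions:
  assumes w: "w \<in> signed_perms n"
  shows "neg_count n w \<le> inversions (nonzero_range n) w"
  unfolding neg_count_def inversions_def
proof (rule card_inj_on_le[of "\<lambda>p. (-p, p)"])
  show "inj_on (\<lambda>p. (- p, p)) {i \<in> {1..int n}. w i < 0}" by (auto simp: inj_on_def)
  show "(\<lambda>p. (- p, p)) ` {i \<in> {1..int n}. w i < 0} \<subseteq> {(p, q) \<in> nonzero_range n \<times> nonzero_range n. p < q \<and> w q < w p}"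
    using signed_perm_odd[OF w] by (auto simp: nonzero_range_iff)
  show "finite {(p, q) \<in> nonzero_range n \<times> nonzero_range n. p < q \<and> w q < w p}"
    by (rule finite_subset[of _ "nonzero_range n \<times> nonzero_range n"]) (auto simp: finite_nonzero_range)
qed

lemma lenD_int: "w \<in> signed_perms n \<Longrightarrow> int (lenD n w) = int (inversions (nonzero_range n) w) - int (neg_count n w)"
  using neg_count_le_inversions[of w n] unfolding lenD_def by simp

lemma signed_perm_1_2_nonzero: "2 \<le> n \<Longrightarrow> w \<in> signed_perms n \<Longrightarrow> w 1 \<noteq> 0 \<and> w 2 \<noteq> 0 \<and> w 1 + w 2 \<noteq> 0"
proof -
  assume n: "2 \<le> n" and w: "w \<in> signed_perms n"
  have "w 1 \<noteq> 0" "w 2 \<noteq> 0" using signed_perm_pos[OF w, of 1] signed_perm_pos[OF w, of 2] n by auto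
  moreover have "w 1 \<noteq> w (-2)" using signed_perm_inj[OF w, of 1 "-2"] by simp
  ultimately show ?thesis using signed_perm_odd[OF w, of 2] by auto
qed

lemma genD0_neg_count_even_step:
  assumes w: "w \<in> signed_perms n" and n: "2 \<le> n"
  shows "int (neg_count n (w \<circ> genD0)) = int (neg_count n w) + 2 * (of_bool (0 < w 1) + of_bool (0 < w 2) - 1)"
  using genD0_neg_count[OF w n] signed_perm_1_2_nonzero[OF n w] by auto

lemma typeD_closed:
  assumes n: "2 \<le> n" and w: "w \<in> coxW TypeD n" and i: "i \<in> {0..int n - 1}"
  shows "w \<circ> genD i \<in> coxW TypeD n"
proof -
  have ws: "w \<in> signed_perms n" and ev: "even (neg_count n w)" using w typeD_iff by auto
  show ?thesis
  proof (cases "i = 0")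
    case True
    have n1: "1 \<le> n" using n by simp
    have "w \<circ> genD0 \<in> signed_perms n" using genD0_inv genD0_odd genD0_out[OF n] by (auto intro!: signed_perm_comp[OF ws])
    moreover have "even (int (neg_count n (w \<circ> genD0)))" using genD0_neg_count_even_step[OF ws n] ev by simp
    ultimately show ?thesis using True unfolding genD_def typeD_iff by simp
  next
    case False
    hence i': "1 \<le> i" "i + 1 \<le> int n" using i by auto
    have "w \<circ> gen_adj i \<in> signed_perms n" using gen_adj_inv[OF i'(1)] gen_adj_odd[OF i'(1)] gen_adj_out[OF i'] by (auto intro!: signed_perm_comp[OF ws])
    moreover have "even (neg_count n (w \<circ> gen_adj i))" using gen_adj_neg_count[OF ws i'] ev by simp
    ultimately show ?thesis using False unfolding genD_def typeD_iff by simp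
  qed
qed

lemma typeD_length_step:
  assumes n: "2 \<le> n" and w: "w \<in> signed_perms n" and i: "i \<in> {0..int n - 1}"
  shows "int (lenD n (w \<circ> genD i)) = int (lenD n w) + (if descD i w then -2 else 2)"
proof (cases "i = 0")
  case True
  have ws: "w \<circ> genD0 \<in> signed_perms n" using genD0_inv genD0_odd genD0_out[OF n] by (auto intro!: signed_perm_comp[OF w])
  have "w 1 + w 2 \<noteq> 0" using signed_perm_1_2_nonzero[OF n w] by simp
  thus ?thesis using True genD0_inversions[OF w n] genD0_neg_count[OF w n] lenD_int[OF w] lenD_int[OF ws]
    unfolding genD_def descD_def by auto
next
  case False
  hence i': "1 \<le> i" "i + 1 \<le> int n" using i by auto
  have ws: "w \<circ> gen_adj i \<in> signed_perms n" using gen_adj_inv[OF i'(1)] gen_adj_odd[OF i'(1)] gen_adj_out[OF i'] by (auto intro!: signed_perm_comp[OF w])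
  have "w i \<noteq> w (i+1)" using signed_perm_inj[OF w, of i "i+1"] by simp
  thus ?thesis using False gen_adj_inversions[OF w i'] gen_adj_neg_count[OF w i'] lenD_int[OF w] lenD_int[OF ws]
    unfolding genD_def descD_def by auto
qed

lemma typeD_descent_exists:
  assumes n: "2 \<le> n" and w: "w \<in> coxW TypeD n" and nid: "w \<noteq> id"
  shows "\<exists>i\<in>{0..int n - 1}. descD i w"
proof (rule ccontr)
  assume "\<not> ?thesis"
  hence nc: "\<And>i. i \<in> {0..int n - 1} \<Longrightarrow> \<not> descD i w" by blast
  have ws: "w \<in> signed_perms n" and ev: "even (neg_count n w)" using w typeD_iff by auto
  have "\<not> descD 0 w" using nc n by simp
  hence "\<not> w 1 + w 2 < 0" unfolding descD_def by simp
  hence s: "0 < w 1 + w 2" using signed_perm_1_2_nonzero[OF n ws] by linarith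
  have inc: "\<And>i. 1 \<le> i \<Longrightarrow> i < int n \<Longrightarrow> w i < w (i+1)"
  proof -
    fix i :: int assume "1 \<le> i" "i < int n"
    hence "\<not> w (i+1) < w i" using nc[of i] unfolding descD_def by auto
    moreover have "w i \<noteq> w (i+1)" using signed_perm_inj[OF ws, of i "i+1"] by simp
    ultimately show "w i < w (i+1)" by simp
  qed
  show False
  proof (cases "0 < w 1")
    case True thus False using signed_perm_increasing_eq_id[OF ws inc] nid by simp
  next
    case False
    hence "w 1 < 0" using signed_perm_1_2_nonzero[OF n ws] by linarith
    hence "neg_count n w = 1" using signed_perm_increasing_neg_count[OF ws inc] s n by simp
    thus False using ev by simp
  qed
qed

lemma typeD_inj_gen: "inj_on genD {0..int n - 1}"
proof (rule inj_onI)
  fix i j assume i: "i \<in> {0..int n - 1}" and j: "j \<in> {0..int n - 1}" and e: "genD i = genD j"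
  have e1: "genD i 1 = genD j 1" and e2: "genD i i = genD j i" using e by simp_all
  show "i = j"
  proof (cases "i = 0 \<or> j = 0")
    case True thus ?thesis using e1 i j unfolding genD_def genD0_def gen_adj_def transp_def by (auto split: if_splits)
  next
    case False thus ?thesis using e2 i j unfolding genD_def genD0_def gen_adj_def transp_def by (auto split: if_splits)
  qed
qed

lemma typeD_length_function: "2 \<le> n \<Longrightarrow> length_function (coxW TypeD n) genD {0..int n - 1} descD (lenD n) 2"
proof
  assume n: "2 \<le> n"
  show "id \<in> coxW TypeD n" by (simp add: typeD_iff signed_perm_id neg_count_id)
  show "\<And>w i. w \<in> coxW TypeD n \<Longrightarrow> i \<in> {0..int n - 1} \<Longrightarrow> w \<circ> genD i \<in> coxW TypeD n"
    using typeD_closed[OF n] by blast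
  show "lenD n id = 0" by (simp add: lenD_def inversions_id neg_count_id)
  show "\<And>w i. w \<in> coxW TypeD n \<Longrightarrow> i \<in> {0..int n - 1} \<Longrightarrow> descD i w \<Longrightarrow> lenD n (w \<circ> genD i) + 2 = lenD n w"
    using typeD_length_step[OF n] unfolding typeD_iff by fastforce
  show "\<And>w i. w \<in> coxW TypeD n \<Longrightarrow> i \<in> {0..int n - 1} \<Longrightarrow> \<not> descD i w \<Longrightarrow> lenD n (w \<circ> genD i) = lenD n w + 2"
    using typeD_length_step[OF n] unfolding typeD_iff by fastforce
  show "\<And>w. w \<in> coxW TypeD n \<Longrightarrow> w \<noteq> id \<Longrightarrow> \<exists>i\<in>{0..int n - 1}. descD i w"
    using typeD_descent_exists[OF n] by blast
  show "\<And>i. i \<in> {0..int n - 1} \<Longrightarrow> genD i \<circ> genD i = id"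
  proof -
    fix i :: int assume i: "i \<in> {0..int n - 1}"
    show "genD i \<circ> genD i = id"
    proof (cases "i = 0")
      case True thus ?thesis unfolding genD_def using genD0_inv by (auto simp: fun_eq_iff)
    next
      case False hence "1 \<le> i" using i by auto
      thus ?thesis unfolding genD_def using False gen_adj_comp_invol by simp
    qed
  qed
  show "inj_on genD {0..int n - 1}" by (rule typeD_inj_gen)
qed auto

lemma typeD_far_fixes:
  assumes i: "i \<in> {0..int n - 1}" and j: "j \<in> {0..int n - 1}" and f: "far i j"
  shows "(j = 0 \<longrightarrow> genD i 1 = 1 \<and> genD i 2 = 2) \<and> (j \<noteq> 0 \<longrightarrow> genD i j = j \<and> genD i (j+1) = j+1)"
proof (cases "i = 0")
  case True
  hence "3 \<le> j" using f j unfolding far_def by auto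
  thus ?thesis using True unfolding genD_def by (simp add: genD0_pos)
next
  case False
  hence i1: "1 \<le> i" using i by auto
  show ?thesis
  proof (cases "j = 0")
    case True
    hence "3 \<le> i" using f i unfolding far_def by auto
    thus ?thesis using False True unfolding genD_def by (simp add: gen_adj_pos transp_def)
  next
    case jn: False
    hence "2 \<le> \<bar>i - j\<bar>" "1 \<le> j" using f j unfolding far_def by auto
    thus ?thesis using False jn i1 unfolding genD_def by (simp add: gen_adj_pos transp_def) arith
  qed
qed

lemma finite_typeD: "finite (coxW TypeD n)"
  by (rule finite_subset[OF _ finite_signed_perms[of n]]) (auto simp: typeD_iff)


lemma typeD_far_commute:
  assumes "i \<in> {0..int n - 1}" "j \<in> {0..int n - 1}" "far i j"
  shows "descD j (w \<circ> genD i) \<longleftrightarrow> descD j w"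
  using typeD_far_fixes[OF assms] by (cases "j = 0") (simp_all add: descD_def)

lemma coxS_TypeD: "1 \<le> n \<Longrightarrow> coxS TypeD n = genD ` {0..int n - 1}"
  unfolding coxS_def genD_def genD0_def gen_adj_def
  by (auto intro: image_eqI[of _ _ 0] image_eqI[where x = i for i])

lemma T_moment4_typeD:
  assumes "16 \<le> n"
  shows "real n ^ 2 / 20736 \<le> T_moment4 TypeD n \<and> T_moment4 TypeD n \<le> 243 * real n ^ 2"
proof (rule T_moment4_bounds)
  show "descent_model (coxW TypeD n) genD {0..int n - 1} descD (lenD n) 2 (sparse_set n)"
  proof (rule descent_model_sparse_set[OF typeD_length_function finite_typeD])
    show "descD j (w \<circ> genD i) \<longleftrightarrow> descD j w"
      if "i \<in> {0..int n - 1}" "j \<in> {0..int n - 1}" "far i j" for w i j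
      using that by (rule typeD_far_commute)
  qed (use assms in \<open>auto simp: genD_def descD_def gen_adj_pos\<close>)
  show "coxS TypeD n = genD ` {0..int n - 1}" using assms by (intro coxS_TypeD) simp
  show "card {0..int n - 1} = n" by simp
  show "real n / 4 \<le> real (card (sparse_set n))" using assms by (rule card_sparse_set_ge)
qed

theorem theorem3p1:
  shows "\<forall>F :: cox_family. \<exists>c C :: real. 0 < c \<and> c \<le> C \<and>
    (\<forall>\<^sub>F n in sequentially. c * real n ^ 2 \<le> T_moment4 F n \<and> T_moment4 F n \<le> C * real n ^ 2)"
proof
  fix F :: cox_family
  have "\<forall>\<^sub>F n in sequentially. real n ^ 2 / 20736 \<le> T_moment4 F n \<and> T_moment4 F n \<le> 243 * real n ^ 2"
    using T_moment4_typeA T_moment4_typeB T_moment4_typeD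
    by (intro eventually_sequentiallyI[of 16]) (cases F; simp)
  then show "\<exists>c C :: real. 0 < c \<and> c \<le> C \<and>
      (\<forall>\<^sub>F n in sequentially. c * real n ^ 2 \<le> T_moment4 F n \<and> T_moment4 F n \<le> C * real n ^ 2)"
    by (intro exI[of _ "1 / 20736"] exI[of _ 243]) simp
qed

end
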